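(* Assume $b\neq 0$ and $\int_0\frac{\Phi(u)}{|\Psi(u)|}\,\mathrm{d}u=\infty$ (divergence near $0$). Let $(Y_t,t\ge 0)$ be a CBI$(\Psi,\Phi)$ process. Then for every $x\ge 0$, under $\mathbb P_x$, $$r_t(1/Y_t)\xrightarrow[t\to\infty]{d}\mathrm{e}_1,$$ where $\mathrm{e}_1$ is an exponential random variable with parameter $1$ (with the convention $1/0=\infty$).
   Context: Let $\sigma\ge 0$, $b\in\mathbb R$, $\beta\ge 0$, and let $\pi,\nu$ be $\sigma$-finite measures on $(0,\infty)$ with $\int_0^\infty (z\wedge z^2)\pi(\mathrm{d}z)<\infty$ and $\int_0^\infty(1\wedge z)\nu(\mathrm{d}z)<\infty$. The branching mechanism is $\Psi(q)=bq+\frac12\sigma^2q^2+\int_0^\infty(e^{-qu}-1+qu)\pi(\mathrm{d}u)$ and the immigration mechanism is $\Phi(q)=\beta q+\int_0^\infty(1-e^{-qu})\nu(\mathrm{d}u)$, $q\ge 0$; it is assumed that $\Phi(q)>0$ for all $q>0$. For $\lambda\ge 0$, $t\mapsto v_t(\lambda)$ solves $\frac{\partial}{\partial t}v_t(\lambda)=-\Psi(v_t(\lambda))$, $v_0(\lambda)=\lambda$. A CBI$(\Psi,\Phi)$ process is a $[0,\infty)$-valued Markov process $(Y_t)$ with $\mathbb E_x[e^{-\lambda Y_t}]=\exp\big(-xv_t(\lambda)-r_t(\lambda)\big)$, where $\mathbb P_x,\mathbb E_x$ refer to the process started at $x\ge0$ and $r_t(\lambda):=\int_0^t\Phi(v_s(\lambda))\mathrm{d}s=\int_{v_t(\lambda)}^{\lambda}\frac{\Phi(u)}{\Psi(u)}\mathrm{d}u$.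 Also $r_t(\infty):=\lim_{\lambda\to\infty}r_t(\lambda)\in(0,\infty]$. *)

theory Defs
  imports "HOL-Probability.Probability"
begin

text \<open>Branching mechanism Psi and immigration mechanism Phi.
  The Levy measures pi, nu are Borel measures on the reals carried by (0,infinity).\<close>

definition Psi_mech :: "real \<Rightarrow> real \<Rightarrow> real measure \<Rightarrow> real \<Rightarrow> real" where
  "Psi_mech b \<sigma> \<pi> q = b * q + (1/2) * \<sigma>^2 * q^2
      + (\<integral>u. (exp (- q * u) - 1 + q * u) \<partial>\<pi>)"

definition Phi_mech :: "real \<Rightarrow> real measure \<Rightarrow> real \<Rightarrow> real" where
  "Phi_mech \<beta> \<nu> q = \<beta> * q + (\<integral>u. (1 - exp (- q * u)) \<partial>\<nu>)"

definition r_fun :: "(real \<Rightarrow> real) \<Rightarrow> (real \<Rightarrow> real \<Rightarrow> real) \<Rightarrow> real \<Rightarrow> real \<Rightarrow> real" where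
  "r_fun Phi v t l = integral {0..t} (\<lambda>s. Phi (v s l))"

definition r_inf :: "(real \<Rightarrow> real) \<Rightarrow> (real \<Rightarrow> real \<Rightarrow> real) \<Rightarrow> real \<Rightarrow> ereal" where
  "r_inf Phi v t = Lim at_top (\<lambda>l. ereal (r_fun Phi v t l))"

definition r_recip :: "(real \<Rightarrow> real) \<Rightarrow> (real \<Rightarrow> real \<Rightarrow> real) \<Rightarrow> real \<Rightarrow> real \<Rightarrow> ereal" where
  "r_recip Phi v t y = (if y = 0 then r_inf Phi v t else ereal (r_fun Phi v t (1 / y)))"

definition nat_filt :: "'a measure \<Rightarrow> (real \<Rightarrow> 'a \<Rightarrow> real) \<Rightarrow> real \<Rightarrow> 'a measure" where
  "nat_filt M Y s = sigma (space M)
     (\<Union>u\<in>{0..s}. {Y u -` A \<inter> space M | A. A \<in> sets borel})"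

text \<open>CBI(Psi,Phi) process: for each x >= 0, under P x the process Y is [0,infinity)-valued,
  starts at x, and is Markov w.r.t. its natural filtration with the CBI transition semigroup,
  i.e. E_x[exp(-l Y_{s+t}) | F_s] = exp(-Y_s v_t(l) - r_t(l)).\<close>

definition is_CBI :: "(real \<Rightarrow> real) \<Rightarrow> (real \<Rightarrow> real \<Rightarrow> real)
    \<Rightarrow> (real \<Rightarrow> 'a measure) \<Rightarrow> (real \<Rightarrow> 'a \<Rightarrow> real) \<Rightarrow> bool" where
  "is_CBI Phi v P Y \<longleftrightarrow>
     (\<forall>x\<ge>0. prob_space (P x)
        \<and> (\<forall>t\<ge>0. Y t \<in> borel_measurable (P x) \<and> (\<forall>\<omega>\<in>space (P x). Y t \<omega> \<ge> 0))
        \<and> (AE \<omega> in P x. Y 0 \<omega> = x)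
        \<and> (\<forall>s\<ge>0. \<forall>t\<ge>0. \<forall>l\<ge>0.
             AE \<omega> in P x. real_cond_exp (P x) (nat_filt (P x) Y s)
                               (\<lambda>\<omega>. exp (- l * Y (s + t) \<omega>)) \<omega>
                           = exp (- Y s \<omega> * v t l - r_fun Phi v t l)))"

end

theory Submission
  imports Defs
begin

(* The Laplace transform E_x[exp (-l Y_t)] = exp (-x v_t(l) - r_t(l)) shows that v_t and r_t are
   nonnegative, nondecreasing and subhomogeneous (r_t(p l) <= p r_t(l) for p >= 1, by Jensen).
   Near 0 the branching mechanism behaves like b q, so on a small interval (0, delta] the function
   G(q) = integral from q to delta of Phi/|Psi| is finite, blows up at 0 by the divergence
   hypothesis, and changes along the flow by G(v_t(l)) - G(l) = sgn b r_t(l).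
   Hence r_t(l) -> infinity for fixed l > 0, whereas r_t(p l) - r_t(l) is small uniformly in t
   for small l, because G varies little on intervals [q, p q] near 0.
   Let mu_t be the point where l |-> r_t(l) crosses the level w; it is small for large t, and the
   event r_t(1/Y_t) > w lies between {Y_t < 1/mu_t} and {Y_t <= 1/mu_t}. Chernoff-type bounds
   compare these with the Laplace transforms at K mu_t and mu_t/K, which by flatness of r_t are
   both close to exp (-w) when K is large. *)

lemma tendsto_integral_dominated:
  fixes g :: "real \<Rightarrow> 'b \<Rightarrow> real"
  assumes meas: "\<And>q. q \<in> S \<Longrightarrow> g q \<in> borel_measurable M"
    and w: "integrable M w"
    and bound: "\<And>q. q \<in> S \<Longrightarrow> AE u in M. \<bar>g q u\<bar> \<le> w u"
    and lim: "AE u in M. ((\<lambda>q. g q u) \<longlongrightarrow> L u) (at x within S)"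
    and L: "L \<in> borel_measurable M"
  shows "((\<lambda>q. \<integral>u. g q u \<partial>M) \<longlongrightarrow> (\<integral>u. L u \<partial>M)) (at x within S)"
  unfolding tendsto_at_iff_sequentially
proof (intro allI impI)
  fix X :: "nat \<Rightarrow> real"
  assume X: "\<forall>i. X i \<in> S - {x}" and X_lim: "X \<longlonglongrightarrow> x"
  have "(\<lambda>i. \<integral>u. g (X i) u \<partial>M) \<longlonglongrightarrow> (\<integral>u. L u \<partial>M)"
  proof (rule integral_dominated_convergence[OF L _ w])
    show "g (X i) \<in> borel_measurable M" for i
      using X meas by auto
    show "AE u in M. (\<lambda>i. g (X i) u) \<longlonglongrightarrow> L u"
      using lim by eventually_elim (use X X_lim in \<open>auto simp: tendsto_at_iff_sequentially o_def\<close>)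
    show "AE u in M. norm (g (X i) u) \<le> w u" for i
      using bound[of "X i"] X by auto
  qed
  then show "((\<lambda>q. \<integral>u. g q u \<partial>M) \<circ> X) \<longlonglongrightarrow> (\<integral>u. L u \<partial>M)"
    by (simp add: o_def)
qed

lemma continuous_on_integral_dominated:
  fixes g :: "real \<Rightarrow> 'b \<Rightarrow> real"
  assumes meas: "\<And>q. q \<in> S \<Longrightarrow> g q \<in> borel_measurable M"
    and w: "integrable M w"
    and bound: "\<And>q. q \<in> S \<Longrightarrow> AE u in M. \<bar>g q u\<bar> \<le> w u"
    and cont: "AE u in M. continuous_on S (\<lambda>q. g q u)"
  shows "continuous_on S (\<lambda>q. \<integral>u. g q u \<partial>M)"
  unfolding continuous_on_def
proof
  fix x assume x: "x \<in> S"
  show "((\<lambda>q. \<integral>u. g q u \<partial>M) \<longlongrightarrow> (\<integral>u. g x u \<partial>M)) (at x within S)"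
  proof (rule tendsto_integral_dominated[OF meas w bound])
    show "AE u in M. ((\<lambda>q. g q u) \<longlongrightarrow> g x u) (at x within S)"
      using cont by eventually_elim (use x in \<open>auto simp: continuous_on_def\<close>)
  qed (use meas x in auto)
qed

lemma continuous_on_atLeast_if_Icc:
  fixes g :: "real \<Rightarrow> real"
  assumes "\<And>c. continuous_on {a..c} g"
  shows "continuous_on {a..} g"
  unfolding continuous_on_def
proof
  fix x :: real assume x: "x \<in> {a..}"
  have "(g \<longlongrightarrow> g x) (at x within {a..x+1})"
    using assms[of "x+1"] x unfolding continuous_on_def by auto
  moreover have "at x within {a..x+1} = at x within {a..}"
    by (rule at_within_nhd[where S="{..<x+1}"]) (use x in auto)
  ultimately show "(g \<longlongrightarrow> g x) (at x within {a..})"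
    by simp
qed

lemma exp_neg_minus_one_plus_bounds:
  fixes y :: real
  assumes y: "y \<ge> 0"
  shows "0 \<le> exp (-y) - 1 + y" and "exp (-y) - 1 + y \<le> y" and "exp (-y) - 1 + y \<le> y\<^sup>2 / 2"
proof -
  show "0 \<le> exp (-y) - 1 + y" "exp (-y) - 1 + y \<le> y"
    using exp_ge_add_one_self[of "-y"] y by auto
  let ?f = "\<lambda>y::real. 1 - y + y\<^sup>2 / 2 - exp (-y)"
  have "?f 0 \<le> ?f y"
  proof (rule DERIV_nonneg_imp_nondecreasing[OF y])
    fix x :: real
    have "(?f has_real_derivative (-1 + x + exp (-x))) (at x)"
      by (auto intro!: derivative_eq_intros simp: power2_eq_square)
    moreover have "0 \<le> -1 + x + exp (-x)"
      using exp_ge_add_one_self[of "-x"] by simp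
    ultimately show "\<exists>d. (?f has_real_derivative d) (at x) \<and> 0 \<le> d"
      by blast
  qed
  then show "exp (-y) - 1 + y \<le> y\<^sup>2 / 2"
    by simp
qed

lemma one_minus_exp_neg_bounds:
  fixes y :: real
  assumes "y \<ge> 0"
  shows "0 \<le> 1 - exp (-y)" and "1 - exp (-y) \<le> y"
  using exp_ge_add_one_self[of "-y"] assms by auto

lemma le_of_affine_le:
  fixes a b c d :: real
  assumes le: "\<And>x. 0 \<le> x \<Longrightarrow> x * a + b \<le> x * c + d"
  shows "a \<le> c" and "b \<le> d"
proof -
  show "b \<le> d"
    using le[of 0] by simp
  show "a \<le> c"
  proof (rule ccontr)
    assume "\<not> a \<le> c"
    define x where "x = (\<bar>d - b\<bar> + 1) / (a - c)"
    have "0 \<le> x" "x * (a - c) = \<bar>d - b\<bar> + 1"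
      using \<open>\<not> a \<le> c\<close> by (auto simp: x_def)
    then have "0 \<le> x" "x * a - x * c = \<bar>d - b\<bar> + 1"
      by (auto simp: right_diff_distrib)
    then show False
      using le[of x] by linarith
  qed
qed

lemma tendsto_at_top_SUP_mono_on:
  fixes f :: "real \<Rightarrow> 'a::{complete_linorder, linorder_topology}"
  assumes mono: "mono_on {a..} f"
  shows "(f \<longlongrightarrow> (SUP l\<in>{a..}. f l)) at_top"
proof (rule order_tendstoI)
  fix c assume "c < (SUP l\<in>{a..}. f l)"
  then obtain l0 where l0: "l0 \<ge> a" "c < f l0"
    unfolding less_SUP_iff by auto
  show "\<forall>\<^sub>F l in at_top. c < f l"
    using eventually_ge_at_top[of l0]
    by eventually_elim (use l0 mono in \<open>auto intro: less_le_trans simp: mono_on_def\<close>)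
next
  fix c assume "(SUP l\<in>{a..}. f l) < c"
  show "\<forall>\<^sub>F l in at_top. f l < c"
    using eventually_ge_at_top[of a]
  proof eventually_elim
    case (elim l)
    then have "f l \<le> (SUP l\<in>{a..}. f l)"
      by (intro SUP_upper) simp
    then show ?case
      using \<open>(SUP l\<in>{a..}. f l) < c\<close> by (rule le_less_trans)
  qed
qed

lemma borel_upward_closed:
  fixes A :: "real set"
  assumes up: "\<And>x y. x \<in> A \<Longrightarrow> x \<le> y \<Longrightarrow> y \<in> A"
  shows "A \<in> sets borel"
proof -
  have "mono (indicator A :: real \<Rightarrow> real)"
    using up by (auto simp: mono_def indicator_def)
  then have "indicator A -` {1::real} \<inter> space borel \<in> sets borel"
    by (intro measurable_sets[OF borel_measurable_mono]) auto
  moreover have "indicator A -` {1::real} = A"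
    by (auto simp: indicator_def)
  ultimately show ?thesis
    by simp
qed

lemma first_hitting_time:
  fixes f :: "real \<Rightarrow> real"
  assumes f: "continuous_on {a..b} f" and "a \<le> b" "f a \<le> y" "y \<le> f b"
  obtains \<tau> where "a \<le> \<tau>" "\<tau> \<le> b" "f \<tau> = y" "\<And>x. a \<le> x \<Longrightarrow> x < \<tau> \<Longrightarrow> f x < y"
proof -
  define T where "T = {x \<in> {a..b}. y \<le> f x}"
  have "closed T"
    unfolding T_def by (rule continuous_on_closed_Collect_le[OF continuous_on_const f closed_atLeastAtMost])
  then have "compact T"
    unfolding compact_eq_bounded_closed by (auto intro: bounded_subset[of "{a..b}"] simp: T_def)
  moreover have "T \<noteq> {}"
    using assms unfolding T_def by auto
  ultimately obtain \<tau> where \<tau>: "\<tau> \<in> T" and min: "\<And>x. x \<in> T \<Longrightarrow> \<tau> \<le> x"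
    using compact_attains_inf by meson
  then have \<tau>_ab: "a \<le> \<tau>" "\<tau> \<le> b" "y \<le> f \<tau>"
    unfolding T_def by auto
  obtain x where x: "a \<le> x" "x \<le> \<tau>" "f x = y"
    using IVT'[of f a y \<tau>] \<tau>_ab assms continuous_on_subset[OF f, of "{a..\<tau>}"] by auto
  then have "x = \<tau>"
    using min[of x] \<tau>_ab unfolding T_def by auto
  show thesis
  proof (rule that[OF \<tau>_ab(1,2)])
    show "f \<tau> = y"
      using x \<open>x = \<tau>\<close> by simp
    show "f x' < y" if "a \<le> x'" "x' < \<tau>" for x'
    proof (rule ccontr)
      assume "\<not> f x' < y"
      then have "x' \<in> T"
        using that \<tau>_ab unfolding T_def by auto
      then show False
        using min[of x'] that by simp
    qed
  qed
qed

lemma last_hitting_time: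
  fixes f :: "real \<Rightarrow> real"
  assumes f: "continuous_on {a..b} f" and "a \<le> b" "y \<le> f a" "f b < y"
  obtains \<tau> where "a \<le> \<tau>" "\<tau> < b" "f \<tau> = y" "\<And>x. \<tau> < x \<Longrightarrow> x \<le> b \<Longrightarrow> f x < y"
proof -
  define T where "T = {x \<in> {a..b}. y \<le> f x}"
  have "closed T"
    unfolding T_def by (rule continuous_on_closed_Collect_le[OF continuous_on_const f closed_atLeastAtMost])
  then have "compact T"
    unfolding compact_eq_bounded_closed by (auto intro: bounded_subset[of "{a..b}"] simp: T_def)
  moreover have "T \<noteq> {}"
    using assms unfolding T_def by auto
  ultimately obtain \<tau> where \<tau>: "\<tau> \<in> T" and max: "\<And>x. x \<in> T \<Longrightarrow> x \<le> \<tau>"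
    using compact_attains_sup by meson
  then have \<tau>_ab: "a \<le> \<tau>" "\<tau> \<le> b" "y \<le> f \<tau>"
    unfolding T_def by auto
  obtain x where x: "\<tau> \<le> x" "x \<le> b" "f x = y"
    using IVT2'[of f b y \<tau>] \<tau>_ab assms continuous_on_subset[OF f, of "{\<tau>..b}"] by auto
  then have "x = \<tau>"
    using max[of x] \<tau>_ab unfolding T_def by auto
  show thesis
  proof (rule that[OF \<tau>_ab(1)])
    show "\<tau> < b" "f \<tau> = y"
      using x \<open>x = \<tau>\<close> assms \<tau>_ab by (auto simp: order.order_iff_strict)
    show "f x' < y" if "\<tau> < x'" "x' \<le> b" for x'
    proof (rule ccontr)
      assume "\<not> f x' < y"
      then have "x' \<in> T"
        using that \<tau>_ab unfolding T_def by auto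
      then show False
        using max[of x'] that by simp
    qed
  qed
qed

lemma (in prob_space) integrable_exp_neg_mult:
  fixes X :: "'a \<Rightarrow> real"
  assumes "X \<in> borel_measurable M" "\<And>\<omega>. \<omega> \<in> space M \<Longrightarrow> 0 \<le> X \<omega>" "0 \<le> s"
  shows "integrable M (\<lambda>\<omega>. exp (- s * X \<omega>))"
proof (rule integrable_const_bound[where B=1])
  have "0 \<le> s * X \<omega>" if "\<omega> \<in> space M" for \<omega>
    using assms(2)[OF that] assms(3) by simp
  then show "AE \<omega> in M. norm (exp (- s * X \<omega>)) \<le> 1"
    by (auto intro!: AE_I2)
qed (use assms in measurable)

lemma (in prob_space) prob_le_exp_mult_laplace:
  fixes X :: "'a \<Rightarrow> real"
  assumes X: "X \<in> borel_measurable M" "\<And>\<omega>. \<omega> \<in> space M \<Longrightarrow> 0 \<le> X \<omega>" and s: "0 \<le> s"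
  shows "prob {\<omega> \<in> space M. X \<omega> \<le> c} \<le> exp (s * c) * expectation (\<lambda>\<omega>. exp (- s * X \<omega>))"
proof -
  let ?B = "{\<omega> \<in> space M. X \<omega> \<le> c}"
  have B: "?B \<in> events"
    using X(1) by measurable
  have "prob ?B = expectation (indicator ?B)"
    using B by simp
  also have "\<dots> \<le> expectation (\<lambda>\<omega>. exp (s * c) * exp (- s * X \<omega>))"
  proof (rule integral_mono)
    show "integrable M (indicator ?B :: 'a \<Rightarrow> real)"
      using B by (simp add: integrable_indicator_iff emeasure_eq_measure)
    show "integrable M (\<lambda>\<omega>. exp (s * c) * exp (- s * X \<omega>))"
      by (intro integrable_mult_right integrable_exp_neg_mult X s)
    show "indicator ?B \<omega> \<le> exp (s * c) * exp (- s * X \<omega>)" for \<omega>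
    proof (cases "\<omega> \<in> ?B")
      case True
      then have "s * X \<omega> \<le> s * c"
        using s by (auto intro: mult_left_mono)
      then have "0 \<le> s * c + - s * X \<omega>"
        by simp
      then show ?thesis
        using True by (simp flip: exp_add)
    qed simp
  qed
  finally show ?thesis
    by simp
qed

lemma (in prob_space) laplace_le_prob_less:
  fixes X :: "'a \<Rightarrow> real"
  assumes X: "X \<in> borel_measurable M" "\<And>\<omega>. \<omega> \<in> space M \<Longrightarrow> 0 \<le> X \<omega>" and s: "0 \<le> s"
  shows "expectation (\<lambda>\<omega>. exp (- s * X \<omega>)) \<le> prob {\<omega> \<in> space M. X \<omega> < c} + exp (- s * c)"
proof -
  let ?A = "{\<omega> \<in> space M. X \<omega> < c}"
  have A: "?A \<in> events"
    using X(1) by measurable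
  have "expectation (\<lambda>\<omega>. exp (- s * X \<omega>)) \<le> expectation (\<lambda>\<omega>. indicator ?A \<omega> + exp (- s * c))"
  proof (rule integral_mono)
    show "integrable M (\<lambda>\<omega>. exp (- s * X \<omega>))"
      by (rule integrable_exp_neg_mult[OF X s])
    show "integrable M (\<lambda>\<omega>. indicator ?A \<omega> + exp (- s * c))"
      using A by (intro Bochner_Integration.integrable_add) (auto simp: integrable_indicator_iff emeasure_eq_measure)
    show "exp (- s * X \<omega>) \<le> indicator ?A \<omega> + exp (- s * c)" if "\<omega> \<in> space M" for \<omega>
    proof (cases "\<omega> \<in> ?A")
      case True
      then show ?thesis
        using X(2)[OF that] s by (simp add: mult_nonneg_nonneg add_increasing2)
    next
      case False
      then show ?thesis
        using that s by (auto intro: mult_left_mono)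
    qed
  qed
  also have "\<dots> = prob ?A + exp (- s * c)"
    using A by (subst Bochner_Integration.integral_add) (auto simp: integrable_indicator_iff emeasure_eq_measure prob_space)
  finally show ?thesis .
qed

lemma subalgebra_nat_filt:
  assumes "\<And>u. u \<in> {0..s} \<Longrightarrow> Y u \<in> borel_measurable M"
  shows "subalgebra M (nat_filt M Y s)"
proof -
  let ?G = "\<Union>u\<in>{0..s}. {Y u -` A \<inter> space M | A. A \<in> sets borel}"
  have G: "?G \<subseteq> Pow (space M)"
    by auto
  have "sigma_sets (space M) ?G \<subseteq> sets M"
    using assms by (intro sets.sigma_sets_subset) (auto intro: measurable_sets)
  then show ?thesis
    unfolding subalgebra_def nat_filt_def using G by (simp add: space_measure_of_conv sets_measure_of)
qed

lemma nn_integral_le_if_integrals_le: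
  fixes f :: "real \<Rightarrow> real"
  assumes \<eta>: "0 < \<eta>" and cont: "continuous_on {0<..\<eta>} f" and nonneg: "\<And>u. 0 < u \<Longrightarrow> 0 \<le> f u"
    and bound: "\<And>a. 0 < a \<Longrightarrow> a \<le> \<eta> \<Longrightarrow> integral {a..\<eta>} f \<le> M"
  shows "(\<integral>\<^sup>+ u. indicator {0<..<\<eta>} u * ennreal (f u) \<partial>lborel) \<le> ennreal M"
proof -
  define a where "a n = \<eta> / real (Suc n)" for n
  define F where "F n u = ennreal (indicator {a n..\<eta>} u * f u)" for n u
  have a: "0 < a n" "a n \<le> \<eta>" for n
    using \<eta> by (auto simp: a_def divide_le_eq)
  have F_measurable: "F n \<in> borel_measurable lborel" for n
  proof -
    have "(\<lambda>u. indicator {a n..\<eta>} u *\<^sub>R f u) \<in> borel_measurable borel"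
      by (rule borel_measurable_continuous_on_indicator)
         (use a[of n] in \<open>auto intro: continuous_on_subset[OF cont]\<close>)
    then show ?thesis
      unfolding F_def by (simp add: measurable_lborel1)
  qed
  have "incseq F"
  proof (intro incseq_SucI le_funI)
    fix n u
    have "a (Suc n) \<le> a n"
      using \<eta> unfolding a_def by (intro divide_left_mono) auto
    then show "F n u \<le> F (Suc n) u"
      unfolding F_def using nonneg[of u] a[of "Suc n"] by (auto simp: indicator_def)
  qed
  have F_integral: "integral\<^sup>N lborel (F n) = ennreal (integral {a n..\<eta>} f)" for n
    unfolding F_def
  proof (rule nn_integral_has_integral_lebesgue)
    show "(f has_integral integral {a n..\<eta>} f) {a n..\<eta>}"
      using a[of n] by (intro integrable_integral integrable_continuous_interval continuous_on_subset[OF cont]) auto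
  qed (use a[of n] nonneg in auto)
  have "(\<integral>\<^sup>+ u. indicator {0<..<\<eta>} u * ennreal (f u) \<partial>lborel) \<le> (\<integral>\<^sup>+ u. (SUP n. F n u) \<partial>lborel)"
  proof (intro nn_integral_mono)
    fix u :: real
    show "indicator {0<..<\<eta>} u * ennreal (f u) \<le> (SUP n. F n u)"
    proof (cases "u \<in> {0<..<\<eta>}")
      case True
      obtain n where "\<eta> / u < real n"
        using reals_Archimedean2 by blast
      then have "a n \<le> u"
        using True by (simp add: a_def divide_le_eq field_simps)
      then have "F n u = ennreal (f u)"
        using True unfolding F_def by auto
      moreover have "F n u \<le> (SUP n. F n u)"
        by (rule SUP_upper) simp
      ultimately show ?thesis
        using True by simp
    qed simp
  qed
  also have "\<dots> = (SUP n. integral\<^sup>N lborel (F n))"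
    by (rule nn_integral_monotone_convergence_SUP[OF \<open>incseq F\<close> F_measurable])
  also have "\<dots> \<le> ennreal M"
    unfolding F_integral using bound a by (auto intro!: SUP_least ennreal_leI)
  finally show ?thesis .
qed

lemma cdf_exponential_1: "cdf (density lborel (exponential_density 1)) z = (if 0 \<le> z then 1 - exp (- z) else 0)"
proof -
  have "cdf (density lborel (exponential_density 1)) z = enn2real (emeasure (density lborel (exponential_density 1)) {..z})"
    by (simp add: cdf_def2 measure_def)
  also have "\<dots> = erlang_CDF 0 1 z"
    using emeasure_erlang_density[of 1 0 z] by simp
  finally show ?thesis
    by (simp add: erlang_CDF_0)
qed

section \<open>Branching and immigration mechanisms\<close>

definition psi_kernel :: "real \<Rightarrow> real \<Rightarrow> real" where
  "psi_kernel q u = exp (- q * u) - 1 + q * u"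

definition phi_kernel :: "real \<Rightarrow> real \<Rightarrow> real" where
  "phi_kernel q u = 1 - exp (- q * u)"

lemma psi_kernel_bounds:
  assumes "0 \<le> q" "0 < u"
  shows "0 \<le> psi_kernel q u" and "psi_kernel q u \<le> q * u" and "psi_kernel q u \<le> q\<^sup>2 * u\<^sup>2 / 2"
  using exp_neg_minus_one_plus_bounds[of "q * u"] assms
  by (auto simp: psi_kernel_def power_mult_distrib)

lemma psi_kernel_dominated:
  assumes q: "0 \<le> q" "q \<le> c" and u: "0 < u"
  shows "\<bar>psi_kernel q u\<bar> \<le> max c (c\<^sup>2) * min u (u\<^sup>2)"
proof -
  have "psi_kernel q u \<le> c * u"
    using psi_kernel_bounds(2)[OF q(1) u] mult_right_mono[OF q(2), of u] u by linarith
  moreover have "psi_kernel q u \<le> c\<^sup>2 * u\<^sup>2"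
  proof -
    have "q\<^sup>2 * u\<^sup>2 \<le> c\<^sup>2 * u\<^sup>2"
      using q by (intro mult_right_mono power_mono) auto
    then show ?thesis
      using psi_kernel_bounds(3)[OF q(1) u] zero_le_power2[of "c * u"] unfolding power_mult_distrib
      by linarith
  qed
  moreover have "c * u \<le> max c (c\<^sup>2) * u" "c\<^sup>2 * u\<^sup>2 \<le> max c (c\<^sup>2) * u\<^sup>2"
    using u by (auto intro: mult_right_mono)
  ultimately show ?thesis
    using psi_kernel_bounds(1)[OF q(1) u] by (auto simp: min_def)
qed

lemma psi_kernel_div_bounds:
  assumes q: "0 < q" "q \<le> 1" and u: "0 < u"
  shows "0 \<le> psi_kernel q u / q" and "psi_kernel q u / q \<le> min u (u\<^sup>2)"
    and "psi_kernel q u / q \<le> q * u\<^sup>2 / 2"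
proof -
  show "0 \<le> psi_kernel q u / q"
    using psi_kernel_bounds(1)[of q u] q u by simp
  show le_half: "psi_kernel q u / q \<le> q * u\<^sup>2 / 2"
    using psi_kernel_bounds(3)[of q u] q u by (simp add: divide_le_eq power2_eq_square algebra_simps)
  have "q * u\<^sup>2 \<le> u\<^sup>2"
    using q mult_right_mono[of q 1 "u\<^sup>2"] by simp
  then have "psi_kernel q u / q \<le> u\<^sup>2"
    using le_half zero_le_power2[of u] by linarith
  moreover have "psi_kernel q u / q \<le> u"
    using psi_kernel_bounds(2)[of q u] q u by (simp add: divide_le_eq mult.commute)
  ultimately show "psi_kernel q u / q \<le> min u (u\<^sup>2)"
    by simp
qed

lemma phi_kernel_dominated:
  assumes q: "0 \<le> q" "q \<le> c" and u: "0 < u"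
  shows "\<bar>phi_kernel q u\<bar> \<le> max 1 c * min 1 u"
proof -
  have y: "0 \<le> q * u"
    using q u by simp
  have "q * u \<le> c * u"
    using q u by (intro mult_right_mono) auto
  then have "phi_kernel q u \<le> c * u"
    using one_minus_exp_neg_bounds(2)[OF y] by (simp add: phi_kernel_def)
  moreover have "c * u \<le> max 1 c * u"
    using u by (auto intro: mult_right_mono)
  moreover have "0 \<le> phi_kernel q u" "phi_kernel q u \<le> 1"
    using one_minus_exp_neg_bounds(1)[OF y] by (auto simp: phi_kernel_def)
  ultimately show ?thesis
    by (cases "u \<le> 1") (auto simp: min_def)
qed

locale branching_mechanism =
  fixes \<sigma> b :: real and \<pi> :: "real measure"
  assumes pi_sets: "sets \<pi> = sets borel"
    and pi_supp: "emeasure \<pi> {..0} = 0"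
    and pi_int: "(\<integral>\<^sup>+ z. ennreal (min z (z^2)) \<partial>\<pi>) < \<infinity>"
begin

abbreviation "\<Psi> \<equiv> Psi_mech b \<sigma> \<pi>"

lemma AE_pi_pos: "AE u in \<pi>. u > 0"
  by (rule AE_I'[of "{..0}"]) (use pi_supp pi_sets in \<open>auto simp: null_sets_def\<close>)

lemma integrable_min_pi: "integrable \<pi> (\<lambda>u. min u (u\<^sup>2))"
proof (rule integrableI_nonneg)
  show "(\<lambda>u. min u (u\<^sup>2)) \<in> borel_measurable \<pi>"
    using pi_sets by (simp add: measurable_cong_sets[OF pi_sets refl])
  show "AE u in \<pi>. 0 \<le> min u (u\<^sup>2)"
    using AE_pi_pos by eventually_elim simp
qed (use pi_int in simp)

lemma psi_kernel_measurable: "psi_kernel q \<in> borel_measurable \<pi>"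
  unfolding psi_kernel_def measurable_cong_sets[OF pi_sets refl] by measurable

lemma Psi_eq: "\<Psi> q = b * q + (1/2) * \<sigma>\<^sup>2 * q\<^sup>2 + (\<integral>u. psi_kernel q u \<partial>\<pi>)"
  unfolding Psi_mech_def psi_kernel_def by simp

lemma Psi_0: "\<Psi> 0 = 0"
  by (simp add: Psi_eq psi_kernel_def)

lemma Psi_ge_linear:
  assumes "q \<ge> 0"
  shows "\<Psi> q \<ge> b * q"
proof -
  have "AE u in \<pi>. 0 \<le> psi_kernel q u"
    using AE_pi_pos by eventually_elim (rule psi_kernel_bounds(1)[OF assms])
  then have "0 \<le> (\<integral>u. psi_kernel q u \<partial>\<pi>)"
    by (rule integral_nonneg_AE)
  then show ?thesis
    unfolding Psi_eq by simp
qed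

lemma continuous_on_Psi: "continuous_on {0..} \<Psi>"
proof (rule continuous_on_atLeast_if_Icc)
  fix c :: real
  have "continuous_on {0..c} (\<lambda>q. \<integral>u. psi_kernel q u \<partial>\<pi>)"
  proof (rule continuous_on_integral_dominated[OF psi_kernel_measurable])
    show "integrable \<pi> (\<lambda>u. max c (c\<^sup>2) * min u (u\<^sup>2))"
      by (intro integrable_mult_right integrable_min_pi)
    show "AE u in \<pi>. \<bar>psi_kernel q u\<bar> \<le> max c (c\<^sup>2) * min u (u\<^sup>2)" if "q \<in> {0..c}" for q
      using AE_pi_pos by eventually_elim (use that psi_kernel_dominated in auto)
    show "AE u in \<pi>. continuous_on {0..c} (\<lambda>q. psi_kernel q u)"
      unfolding psi_kernel_def by (intro AE_I2 continuous_intros)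
  qed
  moreover have "\<Psi> = (\<lambda>q. b * q + (1/2) * \<sigma>\<^sup>2 * q\<^sup>2 + (\<integral>u. psi_kernel q u \<partial>\<pi>))"
    by (rule ext) (rule Psi_eq)
  ultimately show "continuous_on {0..c} \<Psi>"
    by (simp add: continuous_intros)
qed

lemma tendsto_integral_psi_kernel_div: "((\<lambda>q. (\<integral>u. psi_kernel q u \<partial>\<pi>) / q) \<longlongrightarrow> 0) (at_right 0)"
proof -
  have "((\<lambda>q. \<integral>u. psi_kernel q u / q \<partial>\<pi>) \<longlongrightarrow> (\<integral>u. 0 \<partial>\<pi>)) (at 0 within {0<..1})"
  proof (rule tendsto_integral_dominated[OF _ integrable_min_pi])
    show "(\<lambda>u. psi_kernel q u / q) \<in> borel_measurable \<pi>" for q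
      using psi_kernel_measurable by measurable
    show "AE u in \<pi>. \<bar>psi_kernel q u / q\<bar> \<le> min u (u\<^sup>2)" if "q \<in> {0<..1}" for q
      using AE_pi_pos by eventually_elim (use psi_kernel_div_bounds(1,2)[of q] that in \<open>subst abs_of_nonneg, auto\<close>)
    show "AE u in \<pi>. ((\<lambda>q. psi_kernel q u / q) \<longlongrightarrow> 0) (at 0 within {0<..1})"
      using AE_pi_pos
    proof eventually_elim
      case (elim u)
      show ?case
      proof (rule tendsto_sandwich[where f="\<lambda>_. 0" and h="\<lambda>q. q * u\<^sup>2 / 2"])
        show "\<forall>\<^sub>F q in at 0 within {0<..1}. 0 \<le> psi_kernel q u / q"
          "\<forall>\<^sub>F q in at 0 within {0<..1}. psi_kernel q u / q \<le> q * u\<^sup>2 / 2"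
          using psi_kernel_div_bounds(1,3)[of _ u] elim by (auto simp: eventually_at_filter)
      qed (auto intro!: tendsto_eq_intros)
    qed
  qed simp
  moreover have "at (0::real) within {0<..1} = at_right 0"
    by (rule at_within_nhd[where S="{..<1}"]) auto
  ultimately show ?thesis
    by simp
qed

lemma Psi_linear_at_0: "((\<lambda>q. (\<Psi> q - b * q) / q) \<longlongrightarrow> 0) (at_right 0)"
proof -
  have "((\<lambda>q. (1/2) * \<sigma>\<^sup>2 * q + (\<integral>u. psi_kernel q u \<partial>\<pi>) / q) \<longlongrightarrow> (1/2) * \<sigma>\<^sup>2 * 0 + 0) (at_right 0)"
    by (intro tendsto_intros tendsto_integral_psi_kernel_div)
  moreover have "\<forall>\<^sub>F q in at_right 0.
      (1/2) * \<sigma>\<^sup>2 * q + (\<integral>u. psi_kernel q u \<partial>\<pi>) / q = (\<Psi> q - b * q) / q"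
    using eventually_at_right_less
    by eventually_elim (simp add: Psi_eq add_divide_distrib power2_eq_square)
  ultimately show ?thesis
    by (simp add: Lim_transform_eventually)
qed

end

locale immigration_mechanism =
  fixes \<beta> :: real and \<nu> :: "real measure"
  assumes beta_nonneg: "\<beta> \<ge> 0"
    and nu_sets: "sets \<nu> = sets borel"
    and nu_supp: "emeasure \<nu> {..0} = 0"
    and nu_int: "(\<integral>\<^sup>+ z. ennreal (min 1 z) \<partial>\<nu>) < \<infinity>"
begin

abbreviation "\<Phi> \<equiv> Phi_mech \<beta> \<nu>"

lemma AE_nu_pos: "AE u in \<nu>. u > 0"
  by (rule AE_I'[of "{..0}"]) (use nu_supp nu_sets in \<open>auto simp: null_sets_def\<close>)

lemma integrable_min_nu: "integrable \<nu> (\<lambda>u. min 1 u)"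
proof (rule integrableI_nonneg)
  show "(\<lambda>u. min 1 u) \<in> borel_measurable \<nu>"
    by (simp add: measurable_cong_sets[OF nu_sets refl])
  show "AE u in \<nu>. 0 \<le> min 1 u"
    using AE_nu_pos by eventually_elim simp
qed (use nu_int in simp)

lemma phi_kernel_measurable: "phi_kernel q \<in> borel_measurable \<nu>"
  unfolding phi_kernel_def measurable_cong_sets[OF nu_sets refl] by measurable

lemma phi_kernel_integrable:
  assumes "q \<ge> 0"
  shows "integrable \<nu> (phi_kernel q)"
proof (rule Bochner_Integration.integrable_bound[OF _ phi_kernel_measurable])
  show "integrable \<nu> (\<lambda>u. max 1 q * min 1 u)"
    by (intro integrable_mult_right integrable_min_nu)
  show "AE u in \<nu>. norm (phi_kernel q u) \<le> norm (max 1 q * min 1 u)"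
    using AE_nu_pos by eventually_elim (use phi_kernel_dominated[OF assms order_refl] in auto)
qed

lemma Phi_eq: "\<Phi> q = \<beta> * q + (\<integral>u. phi_kernel q u \<partial>\<nu>)"
  unfolding Phi_mech_def phi_kernel_def by simp

lemma Phi_0: "\<Phi> 0 = 0"
  by (simp add: Phi_eq phi_kernel_def)

lemma Phi_mono:
  assumes "0 \<le> q" "q \<le> q'"
  shows "\<Phi> q \<le> \<Phi> q'"
proof -
  have "AE u in \<nu>. phi_kernel q u \<le> phi_kernel q' u"
    using AE_nu_pos by eventually_elim (use assms in \<open>auto intro: mult_right_mono simp: phi_kernel_def\<close>)
  then have "(\<integral>u. phi_kernel q u \<partial>\<nu>) \<le> (\<integral>u. phi_kernel q' u \<partial>\<nu>)"
    using assms by (intro integral_mono_AE phi_kernel_integrable) auto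
  then show ?thesis
    unfolding Phi_eq using beta_nonneg assms by (simp add: mult_left_mono add_mono)
qed

lemma Phi_nonneg: "q \<ge> 0 \<Longrightarrow> \<Phi> q \<ge> 0"
  using Phi_mono[of 0 q] Phi_0 by simp

lemma continuous_on_Phi: "continuous_on {0..} \<Phi>"
proof (rule continuous_on_atLeast_if_Icc)
  fix c :: real
  have "continuous_on {0..c} (\<lambda>q. \<integral>u. phi_kernel q u \<partial>\<nu>)"
  proof (rule continuous_on_integral_dominated[OF phi_kernel_measurable])
    show "integrable \<nu> (\<lambda>u. max 1 c * min 1 u)"
      by (intro integrable_mult_right integrable_min_nu)
    show "AE u in \<nu>. \<bar>phi_kernel q u\<bar> \<le> max 1 c * min 1 u" if "q \<in> {0..c}" for q
      using AE_nu_pos by eventually_elim (use that phi_kernel_dominated in auto)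
    show "AE u in \<nu>. continuous_on {0..c} (\<lambda>q. phi_kernel q u)"
      unfolding phi_kernel_def by (intro AE_I2 continuous_intros)
  qed
  moreover have "\<Phi> = (\<lambda>q. \<beta> * q + (\<integral>u. phi_kernel q u \<partial>\<nu>))"
    by (rule ext) (rule Phi_eq)
  ultimately show "continuous_on {0..c} \<Phi>"
    by (simp add: continuous_intros)
qed

lemma tendsto_Phi_0: "(\<Phi> \<longlongrightarrow> 0) (at_right 0)"
proof -
  have "(\<Phi> \<longlongrightarrow> \<Phi> 0) (at 0 within {0..})"
    using continuous_on_Phi by (simp add: continuous_on_def)
  then show ?thesis
    using Phi_0 by (auto intro: tendsto_within_subset)
qed

end

section \<open>Laplace transform of a CBI process\<close>

locale cbi = branching_mechanism + immigration_mechanism +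
  fixes v :: "real \<Rightarrow> real \<Rightarrow> real" and P :: "real \<Rightarrow> 'a measure" and Y :: "real \<Rightarrow> 'a \<Rightarrow> real"
  assumes Phi_pos: "\<And>q. q > 0 \<Longrightarrow> \<Phi> q > 0"
    and v_init: "\<And>l. l \<ge> 0 \<Longrightarrow> v 0 l = l"
    and v_ode: "\<And>l t. l \<ge> 0 \<Longrightarrow> t \<ge> 0 \<Longrightarrow>
                  ((\<lambda>s. v s l) has_real_derivative (- \<Psi> (v t l))) (at t within {0..})"
    and b_ne: "b \<noteq> 0"
    and diverge: "\<And>\<epsilon>. \<epsilon> > 0 \<Longrightarrow>
                  (\<integral>\<^sup>+ u. indicator {0<..<\<epsilon>} u * ennreal (\<Phi> u / \<bar>\<Psi> u\<bar>) \<partial>lborel) = \<infinity>"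
    and CBI: "is_CBI \<Phi> v P Y"
begin

abbreviation "r \<equiv> r_fun \<Phi> v"

lemma prob_space_P: "x \<ge> 0 \<Longrightarrow> prob_space (P x)"
  using CBI unfolding is_CBI_def by blast

lemma Y_measurable: "x \<ge> 0 \<Longrightarrow> t \<ge> 0 \<Longrightarrow> Y t \<in> borel_measurable (P x)"
  using CBI unfolding is_CBI_def by blast

lemma Y_nonneg: "x \<ge> 0 \<Longrightarrow> t \<ge> 0 \<Longrightarrow> \<omega> \<in> space (P x) \<Longrightarrow> Y t \<omega> \<ge> 0"
  using CBI unfolding is_CBI_def by blast

lemma Y_start: "x \<ge> 0 \<Longrightarrow> AE \<omega> in P x. Y 0 \<omega> = x"
  using CBI unfolding is_CBI_def by blast

lemma Y_markov: "x \<ge> 0 \<Longrightarrow> s \<ge> 0 \<Longrightarrow> t \<ge> 0 \<Longrightarrow> l \<ge> 0 \<Longrightarrow>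
    AE \<omega> in P x. real_cond_exp (P x) (nat_filt (P x) Y s) (\<lambda>\<omega>. exp (- l * Y (s + t) \<omega>)) \<omega>
                  = exp (- Y s \<omega> * v t l - r t l)"
  using CBI unfolding is_CBI_def by blast

lemma integrable_exp_Y:
  assumes "x \<ge> 0" "t \<ge> 0" "l \<ge> 0"
  shows "integrable (P x) (\<lambda>\<omega>. exp (- l * Y t \<omega>))"
  by (rule prob_space.integrable_exp_neg_mult[OF prob_space_P Y_measurable Y_nonneg])
     (use assms in auto)

lemma laplace_Y:
  assumes x: "x \<ge> 0" and t: "t \<ge> 0" and l: "l \<ge> 0"
  shows "(\<integral>\<omega>. exp (- l * Y t \<omega>) \<partial>P x) = exp (- x * v t l - r t l)"
proof -
  interpret prob_space "P x"
    using prob_space_P[OF x] .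
  interpret finite_measure_subalgebra "P x" "nat_filt (P x) Y 0"
    by unfold_locales (intro subalgebra_nat_filt Y_measurable x, simp)
  have "AE \<omega> in P x. real_cond_exp (P x) (nat_filt (P x) Y 0) (\<lambda>\<omega>. exp (- l * Y t \<omega>)) \<omega>
      = exp (- x * v t l - r t l)"
    using Y_markov[OF x order_refl t l] Y_start[OF x] by eventually_elim simp
  then have "(\<integral>\<omega>. real_cond_exp (P x) (nat_filt (P x) Y 0) (\<lambda>\<omega>. exp (- l * Y t \<omega>)) \<omega> \<partial>P x)
      = (\<integral>\<omega>. exp (- x * v t l - r t l) \<partial>P x)"
    by (rule integral_cong_AE[rotated 2]) auto
  then have "(\<integral>\<omega>. real_cond_exp (P x) (nat_filt (P x) Y 0) (\<lambda>\<omega>. exp (- l * Y t \<omega>)) \<omega> \<partial>P x)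
      = exp (- x * v t l - r t l)"
    by (simp add: prob_space)
  then show ?thesis
    using real_cond_exp_int(2)[OF integrable_exp_Y[OF x t l]] by simp
qed

text \<open>An inequality between Laplace transforms holds for every initial state \<open>x \<ge> 0\<close>; since the
  exponent is affine in \<open>x\<close>, it splits into one inequality for \<open>v\<close> and one for \<open>r\<close>.\<close>

lemma laplace_exponent_nonneg:
  assumes "x \<ge> 0" "t \<ge> 0" "l \<ge> 0"
  shows "x * 0 + 0 \<le> x * v t l + r t l"
proof -
  interpret prob_space "P x"
    using prob_space_P assms(1) .
  have "(\<integral>\<omega>. exp (- l * Y t \<omega>) \<partial>P x) \<le> (\<integral>\<omega>. 1 \<partial>P x)"
    using Y_nonneg assms by (intro integral_mono integrable_exp_Y) (auto simp: mult_nonneg_nonneg)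
  then show ?thesis
    using laplace_Y[OF assms] by (simp add: prob_space)
qed

lemma laplace_exponent_mono:
  assumes "x \<ge> 0" "t \<ge> 0" "0 \<le> l" "l \<le> l'"
  shows "x * v t l + r t l \<le> x * v t l' + r t l'"
proof -
  have "(\<integral>\<omega>. exp (- l' * Y t \<omega>) \<partial>P x) \<le> (\<integral>\<omega>. exp (- l * Y t \<omega>) \<partial>P x)"
    using Y_nonneg assms by (intro integral_mono integrable_exp_Y) (auto intro!: mult_right_mono)
  then show ?thesis
    using laplace_Y[of x t l] laplace_Y[of x t l'] assms by simp
qed

lemma laplace_exponent_subhomogeneous:
  assumes x: "x \<ge> 0" and t: "t \<ge> 0" and l: "l \<ge> 0" and p: "p \<ge> 1"
  shows "x * v t (p * l) + r t (p * l) \<le> x * (p * v t l) + p * r t l"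
proof -
  interpret prob_space "P x"
    using prob_space_P[OF x] .
  have pl: "p * l \<ge> 0"
    using p l by simp
  have powr_eq: "exp (- l * Y t \<omega>) powr p = exp (- (p * l) * Y t \<omega>)" for \<omega>
    by (simp add: powr_def)
  have "expectation (\<lambda>\<omega>. exp (- l * Y t \<omega>)) powr p \<le> expectation (\<lambda>\<omega>. exp (- l * Y t \<omega>) powr p)"
  proof (rule jensens_inequality[where I="{0<..}" and a=0 and b=0])
    show "integrable (P x) (\<lambda>\<omega>. exp (- l * Y t \<omega>) powr p)"
      unfolding powr_eq by (rule integrable_exp_Y[OF x t pl])
  qed (use integrable_exp_Y[OF x t l] powr_convex[OF p] in auto)
  then have "exp (p * (- x * v t l - r t l)) \<le> exp (- x * v t (p * l) - r t (p * l))"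
    unfolding powr_eq laplace_Y[OF x t l] laplace_Y[OF x t pl] by (simp add: powr_def)
  then show ?thesis
    by (simp add: algebra_simps)
qed

lemma v_nonneg: "t \<ge> 0 \<Longrightarrow> l \<ge> 0 \<Longrightarrow> 0 \<le> v t l"
  using le_of_affine_le(1)[OF laplace_exponent_nonneg] by auto

lemma r_mono: "t \<ge> 0 \<Longrightarrow> 0 \<le> l \<Longrightarrow> l \<le> l' \<Longrightarrow> r t l \<le> r t l'"
  and v_mono: "t \<ge> 0 \<Longrightarrow> 0 \<le> l \<Longrightarrow> l \<le> l' \<Longrightarrow> v t l \<le> v t l'"
  using le_of_affine_le[OF laplace_exponent_mono] by auto

lemma r_subhomogeneous: "t \<ge> 0 \<Longrightarrow> l \<ge> 0 \<Longrightarrow> p \<ge> 1 \<Longrightarrow> r t (p * l) \<le> p * r t l"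
  and v_subhomogeneous: "t \<ge> 0 \<Longrightarrow> l \<ge> 0 \<Longrightarrow> p \<ge> 1 \<Longrightarrow> v t (p * l) \<le> p * v t l"
  using le_of_affine_le[OF laplace_exponent_subhomogeneous] by auto

lemma r_tendsto_0:
  assumes t: "t \<ge> 0"
  shows "(r t \<longlongrightarrow> 0) (at_right 0)"
proof -
  interpret prob_space "P 0"
    using prob_space_P by simp
  have "((\<lambda>l. \<integral>\<omega>. exp (- l * Y t \<omega>) \<partial>P 0) \<longlongrightarrow> (\<integral>\<omega>. exp (- 0 * Y t \<omega>) \<partial>P 0)) (at 0 within {0<..})"
  proof (rule tendsto_integral_dominated[where w="\<lambda>_. 1"])
    show "AE \<omega> in P 0. \<bar>exp (- l * Y t \<omega>)\<bar> \<le> 1" if "l \<in> {0<..}" for l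
      using that Y_nonneg[OF order_refl t] by (auto intro!: AE_I2 simp: mult_nonneg_nonneg)
  qed (use Y_measurable[OF order_refl t] in \<open>auto intro!: AE_I2 tendsto_eq_intros\<close>)
  then have "((\<lambda>l. \<integral>\<omega>. exp (- l * Y t \<omega>) \<partial>P 0) \<longlongrightarrow> 1) (at_right 0)"
    by (simp add: prob_space)
  moreover have "\<forall>\<^sub>F l in at_right 0. (\<integral>\<omega>. exp (- l * Y t \<omega>) \<partial>P 0) = exp (- r t l)"
    using eventually_at_right_less by eventually_elim (use laplace_Y[of 0 t] t in simp)
  ultimately have "((\<lambda>l. exp (- r t l)) \<longlongrightarrow> 1) (at_right 0)"
    by (rule Lim_transform_eventually)
  then have "((\<lambda>l. - ln (exp (- r t l))) \<longlongrightarrow> - ln 1) (at_right 0)"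
    by (intro tendsto_intros) auto
  then show ?thesis
    by simp
qed

lemma r_le_r_inf:
  assumes "t \<ge> 0" "l \<ge> 0"
  shows "ereal (r t l) \<le> r_inf \<Phi> v t"
proof -
  have "((\<lambda>l. ereal (r t l)) \<longlongrightarrow> (SUP l\<in>{0..}. ereal (r t l))) at_top"
    using r_mono[OF assms(1)] by (intro tendsto_at_top_SUP_mono_on) (auto simp: mono_on_def)
  then have "r_inf \<Phi> v t = (SUP l\<in>{0..}. ereal (r t l))"
    unfolding r_inf_def by (intro tendsto_Lim) auto
  then show ?thesis
    using assms(2) by (auto intro: SUP_upper)
qed

lemma r_recip_antimono:
  assumes t: "t \<ge> 0" and y: "0 \<le> y" "y \<le> y'"
  shows "r_recip \<Phi> v t y' \<le> r_recip \<Phi> v t y"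
proof (cases "y = 0")
  case True
  then show ?thesis
    using r_le_r_inf[OF t, of "1 / y'"] y by (simp add: r_recip_def)
next
  case False
  then have "r t (1 / y') \<le> r t (1 / y)"
    using y by (intro r_mono[OF t]) (auto simp: frac_le)
  then show ?thesis
    using False y by (simp add: r_recip_def)
qed

lemma r_recip_event_measurable:
  assumes x: "x \<ge> 0" and t: "t \<ge> 0"
  shows "{\<omega> \<in> space (P x). r_recip \<Phi> v t (Y t \<omega>) \<le> ereal z} \<in> sets (P x)"
proof -
  let ?A = "{y. r_recip \<Phi> v t (max 0 y) \<le> ereal z}"
  have "?A \<in> sets borel"
  proof (rule borel_upward_closed)
    fix y y' assume "y \<in> ?A" "y \<le> y'"
    moreover have "r_recip \<Phi> v t (max 0 y') \<le> r_recip \<Phi> v t (max 0 y)"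
      using \<open>y \<le> y'\<close> by (intro r_recip_antimono[OF t]) auto
    ultimately show "y' \<in> ?A"
      by (metis (mono_tags) mem_Collect_eq order_trans)
  qed
  then have "Y t -` ?A \<inter> space (P x) \<in> sets (P x)"
    by (rule measurable_sets[OF Y_measurable[OF x t]])
  also have "Y t -` ?A \<inter> space (P x) = {\<omega> \<in> space (P x). r_recip \<Phi> v t (Y t \<omega>) \<le> ereal z}"
    using Y_nonneg[OF x t] by (auto simp: max_def)
  finally show ?thesis .
qed

section \<open>The flow near zero\<close>

lemma v_continuous: "l \<ge> 0 \<Longrightarrow> continuous_on {0..} (\<lambda>s. v s l)"
  unfolding continuous_on_eq_continuous_within using v_ode by (auto intro: DERIV_continuous)

lemma v_has_derivative_at:
  assumes "l \<ge> 0" "s > 0"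
  shows "((\<lambda>s. v s l) has_real_derivative (- \<Psi> (v s l))) (at s)"
  using v_ode[of l s] assms at_within_interior[of s "{0..}"] by simp

lemma Phi_v_continuous: "l \<ge> 0 \<Longrightarrow> continuous_on {0..} (\<lambda>s. \<Phi> (v s l))"
  by (rule continuous_on_compose2[OF continuous_on_Phi v_continuous]) (auto intro: v_nonneg)

lemma Phi_v_integrable: "l \<ge> 0 \<Longrightarrow> 0 \<le> a \<Longrightarrow> (\<lambda>s. \<Phi> (v s l)) integrable_on {a..t}"
  by (rule integrable_continuous_interval, rule continuous_on_subset[OF Phi_v_continuous]) auto

lemma r_mono_time:
  assumes l: "l \<ge> 0" and s: "0 \<le> s" "s \<le> t"
  shows "r s l \<le> r t l"
proof -
  have "r t l = r s l + integral {s..t} (\<lambda>s. \<Phi> (v s l))"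
    unfolding r_fun_def using Henstock_Kurzweil_Integration.integral_combine[OF s Phi_v_integrable[OF l order_refl]]
    by simp
  moreover have "0 \<le> integral {s..t} (\<lambda>s. \<Phi> (v s l))"
    using s l by (intro integral_nonneg Phi_v_integrable Phi_nonneg v_nonneg) auto
  ultimately show ?thesis
    by simp
qed

lemma Psi_near_linear: "\<exists>d>0. \<forall>q. 0 < q \<longrightarrow> q \<le> d \<longrightarrow> \<bar>\<Psi> q - b * q\<bar> \<le> \<bar>b\<bar> / 2 * q"
proof -
  have "\<forall>\<^sub>F q in at_right 0. \<bar>(\<Psi> q - b * q) / q\<bar> < \<bar>b\<bar> / 2"
    using tendstoD[OF Psi_linear_at_0, of "\<bar>b\<bar> / 2"] b_ne by (simp add: dist_real_def)
  then obtain d where "d > 0" and d: "\<And>q. 0 < q \<Longrightarrow> q < d \<Longrightarrow> \<bar>(\<Psi> q - b * q) / q\<bar> < \<bar>b\<bar> / 2"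
    unfolding eventually_at_right_field by auto
  have "\<bar>\<Psi> q - b * q\<bar> \<le> \<bar>b\<bar> / 2 * q" if "0 < q" "q \<le> d / 2" for q
    using d[of q] that \<open>d > 0\<close> by (simp add: abs_divide pos_divide_less_eq)
  then show ?thesis
    using \<open>d > 0\<close> by (intro exI[of _ "d / 2"]) auto
qed

text \<open>All estimates on the flow take place in \<open>(0, \<delta>]\<close>, where \<open>\<Psi> q\<close> has the sign of \<open>b\<close>
  and is comparable to \<open>\<bar>b\<bar> q\<close>.\<close>

definition \<delta> :: real where
  "\<delta> = (SOME d. d > 0 \<and> (\<forall>q. 0 < q \<longrightarrow> q \<le> d \<longrightarrow> \<bar>\<Psi> q - b * q\<bar> \<le> \<bar>b\<bar> / 2 * q))"

lemma delta_pos: "0 < \<delta>"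
  and Psi_near_linear_delta: "0 < q \<Longrightarrow> q \<le> \<delta> \<Longrightarrow> \<bar>\<Psi> q - b * q\<bar> \<le> \<bar>b\<bar> / 2 * q"
  using someI_ex[OF Psi_near_linear] unfolding \<delta>_def[symmetric] by auto

lemma Psi_abs_ge: "0 < q \<Longrightarrow> q \<le> \<delta> \<Longrightarrow> \<bar>b\<bar> / 2 * q \<le> \<bar>\<Psi> q\<bar>"
  using Psi_near_linear_delta[of q] by (auto simp: abs_if split: if_splits)

lemma sgn_Psi:
  assumes "0 < q" "q \<le> \<delta>"
  shows "sgn (\<Psi> q) = sgn b"
proof (cases "b > 0")
  case True
  then have "0 < \<Psi> q"
    using Psi_ge_linear[of q] mult_pos_pos[OF True \<open>0 < q\<close>] assms by linarith
  then show ?thesis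
    using True by simp
next
  case False
  then have "b * q < 0"
    using b_ne assms by (simp add: mult_neg_pos)
  then show ?thesis
    using Psi_near_linear_delta[OF assms] False b_ne by (auto simp: sgn_if abs_if split: if_splits)
qed

lemma Psi_le_subcritical: "b > 0 \<Longrightarrow> 0 \<le> q \<Longrightarrow> q \<le> \<delta> \<Longrightarrow> \<Psi> q \<le> 3 * b / 2 * q"
  using Psi_near_linear_delta[of q] Psi_0 by (cases "q = 0") (auto simp: abs_if split: if_splits)

lemma Psi_nonpos_supercritical: "b < 0 \<Longrightarrow> 0 \<le> q \<Longrightarrow> q \<le> \<delta> \<Longrightarrow> \<Psi> q \<le> 0"
  using Psi_near_linear_delta[of q] Psi_0 mult_neg_pos[of b q]
  by (cases "q = 0") (auto simp: abs_if split: if_splits)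

definition ratio :: "real \<Rightarrow> real" where
  "ratio q = \<Phi> q / \<bar>\<Psi> q\<bar>"

text \<open>\<open>G\<close> is a primitive of \<open>- \<Phi> / \<bar>\<Psi>\<bar>\<close> on \<open>(0, \<delta>]\<close>; the divergence hypothesis says exactly
  that \<open>G\<close> is unbounded near \<open>0\<close>.\<close>

definition G :: "real \<Rightarrow> real" where
  "G q = integral {q..\<delta>} ratio"

lemma ratio_nonneg: "0 \<le> q \<Longrightarrow> 0 \<le> ratio q"
  unfolding ratio_def using Phi_nonneg by simp

lemma continuous_on_ratio: "continuous_on {0<..\<delta>} ratio"
proof -
  have "continuous_on {0<..\<delta>} \<Phi>" "continuous_on {0<..\<delta>} \<Psi>"
    by (auto intro: continuous_on_subset[OF continuous_on_Phi] continuous_on_subset[OF continuous_on_Psi])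
  moreover have "\<Psi> q \<noteq> 0" if "q \<in> {0<..\<delta>}" for q
  proof -
    have "0 < \<bar>b\<bar> / 2 * q"
      using that b_ne by simp
    then show ?thesis
      using Psi_abs_ge[of q] that by auto
  qed
  ultimately show ?thesis
    unfolding ratio_def by (intro continuous_intros) auto
qed

lemma ratio_integrable: "0 < p \<Longrightarrow> q \<le> \<delta> \<Longrightarrow> ratio integrable_on {p..q}"
  by (intro integrable_continuous_interval continuous_on_subset[OF continuous_on_ratio]) auto

lemma G_diff:
  assumes "0 < p" "p \<le> q" "q \<le> \<delta>"
  shows "G p - G q = integral {p..q} ratio"
  using Henstock_Kurzweil_Integration.integral_combine[OF assms(2,3) ratio_integrable[of p \<delta>]] assms unfolding G_def by simp

lemma G_antimono:
  assumes "0 < p" "p \<le> q" "q \<le> \<delta>"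
  shows "G q \<le> G p"
  using G_diff[OF assms] integral_nonneg[OF ratio_integrable, of p q] assms ratio_nonneg by force

lemma G_has_derivative:
  assumes a: "0 < a" and q: "q \<in> {a..\<delta>}"
  shows "(G has_real_derivative (- ratio q)) (at q within {a..\<delta>})"
proof -
  have "((\<lambda>x. integral {a..\<delta>} ratio - integral {a..x} ratio) has_real_derivative (0 - ratio q))
      (at q within {a..\<delta>})"
    using a q by (intro derivative_intros integral_has_real_derivative
        continuous_on_subset[OF continuous_on_ratio]) auto
  then have "((\<lambda>x. integral {a..\<delta>} ratio - integral {a..x} ratio) has_real_derivative (- ratio q))
      (at q within {a..\<delta>})"
    by simp
  then show ?thesis
  proof (rule has_field_derivative_transform_within[where d=1])
    show "integral {a..\<delta>} ratio - integral {a..x} ratio = G x" if "x \<in> {a..\<delta>}" for x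
      using G_diff[of a x] that a by (simp add: G_def)
  qed (use q in auto)
qed

lemma G_along_v:
  assumes l: "l > 0" and t: "t \<ge> 0" and a: "a > 0"
    and path: "\<And>s. 0 \<le> s \<Longrightarrow> s \<le> t \<Longrightarrow> v s l \<in> {a..\<delta>}"
  shows "G (v t l) - G l = sgn b * r t l"
proof -
  have "((\<lambda>s. G (v s l)) has_vector_derivative (sgn b * \<Phi> (v s l))) (at s within {0..t})"
    if s: "s \<in> {0..t}" for s
  proof -
    have vs: "v s l \<in> {a..\<delta>}"
      using path s by auto
    have dG: "(G has_real_derivative (- ratio (v s l))) (at (v s l) within (\<lambda>s. v s l) ` {0..t})"
      by (rule DERIV_subset[OF G_has_derivative[OF a vs]]) (use path in auto)
    have dv: "((\<lambda>s. v s l) has_real_derivative (- \<Psi> (v s l))) (at s within {0..t})"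
      by (rule DERIV_subset[OF v_ode]) (use l s in auto)
    have "((\<lambda>s. G (v s l)) has_real_derivative (- ratio (v s l)) * (- \<Psi> (v s l)))
        (at s within {0..t})"
      using DERIV_image_chain[OF dG dv] unfolding comp_def .
    moreover have "(- ratio (v s l)) * (- \<Psi> (v s l)) = sgn b * \<Phi> (v s l)"
    proof -
      have "\<Psi> (v s l) / \<bar>\<Psi> (v s l)\<bar> = sgn b"
        using sgn_Psi[of "v s l"] vs a by (simp add: real_sgn_eq)
      moreover have "(- ratio (v s l)) * (- \<Psi> (v s l)) = \<Phi> (v s l) * (\<Psi> (v s l) / \<bar>\<Psi> (v s l)\<bar>)"
        unfolding ratio_def by simp
      ultimately show ?thesis
        by simp
    qed
    ultimately show ?thesis
      by (simp add: has_real_derivative_iff_has_vector_derivative)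
  qed
  then have "((\<lambda>s. sgn b * \<Phi> (v s l)) has_integral (G (v t l) - G (v 0 l))) {0..t}"
    using t by (intro fundamental_theorem_of_calculus) auto
  then have "((\<lambda>s. sgn b * \<Phi> (v s l)) has_integral (G (v t l) - G l)) {0..t}"
    using v_init l by simp
  then have "integral {0..t} (\<lambda>s. sgn b * \<Phi> (v s l)) = G (v t l) - G l"
    by (rule integral_unique)
  then show ?thesis
    unfolding r_fun_def by simp
qed

lemma ratio_integral_unbounded:
  assumes \<eta>: "0 < \<eta>" "\<eta> \<le> \<delta>"
  obtains a where "0 < a" "a \<le> \<eta>" "\<And>q. 0 < q \<Longrightarrow> q \<le> a \<Longrightarrow> M < integral {q..\<eta>} ratio"
proof -
  have "\<exists>a. 0 < a \<and> a \<le> \<eta> \<and> (\<forall>q. 0 < q \<longrightarrow> q \<le> a \<longrightarrow> M < integral {q..\<eta>} ratio)"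
  proof (rule ccontr)
    assume contra: "\<not> ?thesis"
    have "integral {a..\<eta>} ratio \<le> M" if a: "0 < a" "a \<le> \<eta>" for a
    proof -
      obtain q where q: "0 < q" "q \<le> a" "integral {q..\<eta>} ratio \<le> M"
        using contra a by (auto simp: not_less)
      have "G a \<le> G q"
        using q a \<eta> by (intro G_antimono) auto
      then show ?thesis
        using G_diff[of a \<eta>] G_diff[of q \<eta>] q a \<eta> by linarith
    qed
    then have "(\<integral>\<^sup>+ u. indicator {0<..<\<eta>} u * ennreal (ratio u) \<partial>lborel) \<le> ennreal M"
      using \<eta> ratio_nonneg by (intro nn_integral_le_if_integrals_le continuous_on_subset[OF continuous_on_ratio]) auto
    then show False
      using diverge[OF \<eta>(1)] by (simp add: ratio_def top_unique)
  qed
  then show thesis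
    using that by blast
qed

lemma ratio_le:
  assumes "0 < p" "p \<le> u" "u \<le> \<eta>" "\<eta> \<le> \<delta>"
  shows "ratio u \<le> 2 * \<Phi> \<eta> / (\<bar>b\<bar> * p)"
proof -
  have "\<bar>b\<bar> / 2 * p \<le> \<bar>\<Psi> u\<bar>"
    using Psi_abs_ge[of u] mult_left_mono[of p u "\<bar>b\<bar> / 2"] assms by auto
  moreover have "0 < \<bar>b\<bar> / 2 * p"
    using assms b_ne by simp
  ultimately have "ratio u \<le> \<Phi> \<eta> / (\<bar>b\<bar> / 2 * p)"
    unfolding ratio_def using Phi_nonneg[of u] Phi_mono[of u \<eta>] assms by (intro frac_le) auto
  then show ?thesis
    by (simp add: mult.commute)
qed

lemma ratio_integral_small:
  assumes R: "R \<ge> 1" and \<epsilon>: "\<epsilon> > 0"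
  obtains \<eta> where "0 < \<eta>" "\<eta> \<le> \<delta>"
    "\<And>p q. 0 < p \<Longrightarrow> p \<le> q \<Longrightarrow> q \<le> \<eta> \<Longrightarrow> q \<le> R * p \<Longrightarrow> integral {p..q} ratio \<le> \<epsilon>"
proof -
  have "\<forall>\<^sub>F \<eta> in at_right 0. \<Phi> \<eta> < \<epsilon> * \<bar>b\<bar> / (2 * R)"
    using order_tendstoD(2)[OF tendsto_Phi_0] \<epsilon> R b_ne by simp
  moreover have "\<forall>\<^sub>F \<eta> in at_right 0. \<eta> < \<delta>"
    by (rule order_tendstoD(2)[OF tendsto_ident_at delta_pos])
  ultimately have "\<forall>\<^sub>F \<eta> in at_right 0. 0 < \<eta> \<and> \<eta> < \<delta> \<and> \<Phi> \<eta> < \<epsilon> * \<bar>b\<bar> / (2 * R)"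
    using eventually_at_right_less[of 0] by eventually_elim auto
  then obtain \<eta> where \<eta>: "0 < \<eta>" "\<eta> < \<delta>" "\<Phi> \<eta> < \<epsilon> * \<bar>b\<bar> / (2 * R)"
    using eventually_happens'[OF trivial_limit_at_right_real] by blast
  show thesis
  proof (rule that[of \<eta>])
    fix p q assume pq: "0 < p" "p \<le> q" "q \<le> \<eta>" "q \<le> R * p"
    have "integral {p..q} ratio \<le> integral {p..q} (\<lambda>_. 2 * \<Phi> \<eta> / (\<bar>b\<bar> * p))"
      using pq \<eta> ratio_le by (intro integral_le ratio_integrable) auto
    also have "\<dots> = (q - p) * (2 * \<Phi> \<eta> / (\<bar>b\<bar> * p))"
      using pq by simp
    also have "\<dots> \<le> (R * p) * (2 * \<Phi> \<eta> / (\<bar>b\<bar> * p))"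
      using pq Phi_nonneg[of \<eta>] \<eta> by (intro mult_right_mono) auto
    also have "\<dots> = 2 * R * \<Phi> \<eta> / \<bar>b\<bar>"
      using pq by (simp add: field_simps)
    also have "\<dots> \<le> \<epsilon>"
      using \<eta>(3) R b_ne by (simp add: field_simps)
    finally show "integral {p..q} ratio \<le> \<epsilon>" .
  qed (use \<eta> in auto)
qed

subsection \<open>Subcritical case\<close>

lemma v_le_initial_subcritical:
  assumes b: "b > 0" and l: "l \<ge> 0" and s: "s \<ge> 0"
  shows "v s l \<le> l"
proof -
  have "v s l \<le> v 0 l"
  proof (rule DERIV_nonpos_imp_decreasing_open[OF s])
    fix x assume x: "0 < x" "x < s"
    have "0 \<le> b * v x l"
      using b v_nonneg[of x l] x l by simp
    also have "\<dots> \<le> \<Psi> (v x l)"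
      using Psi_ge_linear v_nonneg[of x l] x l by simp
    finally show "\<exists>y. ((\<lambda>s. v s l) has_real_derivative y) (at x) \<and> y \<le> 0"
      using v_has_derivative_at[OF l, of x] x by auto
  qed (use v_continuous[OF l] in \<open>auto intro: continuous_on_subset\<close>)
  then show ?thesis
    using v_init[OF l] by simp
qed

lemma v_ge_exp_subcritical:
  assumes b: "b > 0" and l: "0 < l" "l \<le> \<delta>" and s: "s \<ge> 0"
  shows "l * exp (- (3 * b / 2) * s) \<le> v s l"
proof -
  define C where "C = 3 * b / 2"
  have "v 0 l * exp (C * 0) \<le> v s l * exp (C * s)"
  proof (rule DERIV_nonneg_imp_increasing_open[OF s])
    fix x assume x: "0 < x" "x < s"
    have "((\<lambda>x. v x l * exp (C * x)) has_real_derivative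
        (- \<Psi> (v x l) * exp (C * x) + v x l * (exp (C * x) * C))) (at x)"
      using v_has_derivative_at[of l x] l x by (auto intro!: derivative_eq_intros)
    moreover have "\<Psi> (v x l) \<le> C * v x l"
      unfolding C_def using Psi_le_subcritical[OF b] v_nonneg[of x l] v_le_initial_subcritical[OF b, of l x] l x
      by auto
    then have "0 \<le> - \<Psi> (v x l) * exp (C * x) + v x l * (exp (C * x) * C)"
      by (simp add: algebra_simps)
    ultimately show "\<exists>y. ((\<lambda>x. v x l * exp (C * x)) has_real_derivative y) (at x) \<and> 0 \<le> y"
      by blast
  qed (use l in \<open>auto intro!: continuous_intros continuous_on_subset[OF v_continuous]\<close>)
  then have "l \<le> v s l * exp (C * s)"
    using v_init l by simp
  then have "l * exp (- C * s) \<le> v s l * exp (C * s) * exp (- C * s)"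
    by (intro mult_right_mono) auto
  also have "\<dots> = v s l"
    by (simp add: exp_minus field_simps)
  finally show ?thesis
    unfolding C_def .
qed

lemma v_le_exp_subcritical:
  assumes b: "b > 0" and l: "0 \<le> l" and s: "s \<ge> 0"
  shows "v s l \<le> l * exp (- b * s)"
proof -
  have "v s l * exp (b * s) \<le> v 0 l * exp (b * 0)"
  proof (rule DERIV_nonpos_imp_decreasing_open[OF s])
    fix x assume x: "0 < x" "x < s"
    have "((\<lambda>x. v x l * exp (b * x)) has_real_derivative
        (- \<Psi> (v x l) * exp (b * x) + v x l * (exp (b * x) * b))) (at x)"
      using v_has_derivative_at[of l x] l x by (auto intro!: derivative_eq_intros)
    moreover have "b * v x l \<le> \<Psi> (v x l)"
      using Psi_ge_linear v_nonneg[of x l] l x by simp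
    then have "- \<Psi> (v x l) * exp (b * x) + v x l * (exp (b * x) * b) \<le> 0"
      by (simp add: algebra_simps)
    ultimately show "\<exists>y. ((\<lambda>x. v x l * exp (b * x)) has_real_derivative y) (at x) \<and> y \<le> 0"
      by blast
  qed (use l in \<open>auto intro!: continuous_intros continuous_on_subset[OF v_continuous]\<close>)
  then have "v s l * exp (b * s) \<le> l"
    using v_init l by simp
  then have "v s l * exp (b * s) * exp (- b * s) \<le> l * exp (- b * s)"
    by (intro mult_right_mono) auto
  then show ?thesis
    by (simp add: exp_minus field_simps)
qed

lemma G_along_v_subcritical:
  assumes b: "b > 0" and l: "0 < l" "l \<le> \<delta>" and t: "t \<ge> 0"
  shows "G (v t l) - G l = r t l"
proof -
  have "G (v t l) - G l = sgn b * r t l"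
  proof (rule G_along_v[OF l(1) t])
    show "0 < l * exp (- (3 * b / 2) * t)"
      using l by simp
    fix s assume s: "0 \<le> s" "s \<le> t"
    have "l * exp (- (3 * b / 2) * t) \<le> l * exp (- (3 * b / 2) * s)"
      using l b s by (intro mult_left_mono) auto
    then have "l * exp (- (3 * b / 2) * t) \<le> v s l"
      using v_ge_exp_subcritical[OF b l s(1)] by (rule order_trans)
    then show "v s l \<in> {l * exp (- (3 * b / 2) * t)..\<delta>}"
      using v_le_initial_subcritical[OF b, of l s] l s by auto
  qed
  then show ?thesis
    using b by simp
qed

lemma r_unbounded_subcritical:
  assumes b: "b > 0" and e: "0 < e" "e \<le> \<delta>"
  shows "\<forall>\<^sub>F t in at_top. w < r t e"
proof -
  obtain a where a: "0 < a" and big: "\<And>q. 0 < q \<Longrightarrow> q \<le> a \<Longrightarrow> w + G e < G q"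
    using ratio_integral_unbounded[OF delta_pos order_refl, of "w + G e"] unfolding G_def by metis
  have "((\<lambda>t. exp (- b * t)) \<longlongrightarrow> 0) at_top"
    using b by (intro filterlim_compose[OF exp_at_bot] filterlim_tendsto_neg_mult_at_bot[OF tendsto_const]
        filterlim_ident) auto
  then have "((\<lambda>t. e * exp (- b * t)) \<longlongrightarrow> 0) at_top"
    by (rule tendsto_mult_right_zero)
  then have "\<forall>\<^sub>F t in at_top. e * exp (- b * t) < a"
    using a by (rule order_tendstoD)
  then show ?thesis
    using eventually_ge_at_top[of 0]
  proof eventually_elim
    case (elim t)
    have "0 < e * exp (- (3 * b / 2) * t)"
      using e by simp
    then have "0 < v t e"
      using v_ge_exp_subcritical[OF b e elim(2)] by linarith
    moreover have "v t e \<le> a"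
      using v_le_exp_subcritical[OF b _ elim(2), of e] e elim(1) by simp
    ultimately have "w + G e < G (v t e)"
      by (rule big)
    then show ?case
      using G_along_v_subcritical[OF b e elim(2)] by simp
  qed
qed

lemma r_window_small_subcritical:
  assumes b: "b > 0" and p: "p \<ge> 1" and \<epsilon>: "\<epsilon> > 0"
  obtains \<eta> where "\<eta> > 0"
    "\<And>t l. t \<ge> 0 \<Longrightarrow> 0 < l \<Longrightarrow> p * l \<le> \<eta> \<Longrightarrow> r t (p * l) - r t l \<le> \<epsilon> \<and> v t (p * l) \<le> \<epsilon>"
proof -
  obtain \<eta>\<^sub>1 where \<eta>\<^sub>1: "0 < \<eta>\<^sub>1" "\<eta>\<^sub>1 \<le> \<delta>"
    and small: "\<And>p' q. 0 < p' \<Longrightarrow> p' \<le> q \<Longrightarrow> q \<le> \<eta>\<^sub>1 \<Longrightarrow> q \<le> p * p' \<Longrightarrow> integral {p'..q} ratio \<le> \<epsilon>"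
    using ratio_integral_small[OF p \<epsilon>] by blast
  show thesis
  proof (rule that[of "min \<eta>\<^sub>1 \<epsilon>"])
    show "min \<eta>\<^sub>1 \<epsilon> > 0"
      using \<eta>\<^sub>1 \<epsilon> by simp
    fix t l :: real assume t: "t \<ge> 0" and l: "0 < l" "p * l \<le> min \<eta>\<^sub>1 \<epsilon>"
    have "l \<le> p * l"
      using l p by simp
    then have pl: "l \<le> p * l" "p * l \<le> \<eta>\<^sub>1" "p * l \<le> \<delta>" "l \<le> \<delta>" "0 < p * l"
      using l \<eta>\<^sub>1 by linarith+
    have "0 < l * exp (- (3 * b / 2) * t)"
      using l by simp
    then have "0 < v t l"
      using v_ge_exp_subcritical[OF b l(1) _ t] pl by (auto intro: order.strict_trans2)
    moreover have "v t l \<le> v t (p * l)" "v t (p * l) \<le> \<delta>"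
      using v_mono[OF t, of l "p * l"] v_le_initial_subcritical[OF b _ t, of "p * l"] l pl by auto
    ultimately have "G (v t (p * l)) \<le> G (v t l)"
      by (intro G_antimono)
    moreover have "G l - G (p * l) \<le> \<epsilon>"
      using G_diff[of l "p * l"] small[of l "p * l"] l pl by simp
    moreover have "G (v t l) - G l = r t l" "G (v t (p * l)) - G (p * l) = r t (p * l)"
      using G_along_v_subcritical[OF b _ _ t] l pl by auto
    ultimately show "r t (p * l) - r t l \<le> \<epsilon> \<and> v t (p * l) \<le> \<epsilon>"
      using v_le_initial_subcritical[OF b _ t, of "p * l"] l pl by auto
  qed
qed

subsection \<open>Supercritical case\<close>

text \<open>After the last time at which \<open>v\<close> equals \<open>\<eta>\<close> it stays in \<open>[0, \<eta>)\<close>, where \<open>\<Psi> \<le> 0\<close>, so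
  it cannot have decreased.\<close>

lemma v_ge_supercritical:
  assumes b: "b < 0" and \<eta>: "0 < \<eta>" "\<eta> \<le> \<delta>" and l: "\<eta> \<le> l" and s: "0 \<le> s"
  shows "\<eta> \<le> v s l"
proof (rule ccontr)
  assume "\<not> \<eta> \<le> v s l"
  have l0: "0 \<le> l"
    using \<eta> l by simp
  have cont: "continuous_on {0..s} (\<lambda>x. v x l)"
    by (rule continuous_on_subset[OF v_continuous[OF l0]]) auto
  obtain \<tau> where \<tau>: "0 \<le> \<tau>" "\<tau> < s" "v \<tau> l = \<eta>" and below: "\<And>x. \<tau> < x \<Longrightarrow> x \<le> s \<Longrightarrow> v x l < \<eta>"
    using last_hitting_time[OF cont s, of \<eta>] v_init[OF l0] l \<open>\<not> \<eta> \<le> v s l\<close> by auto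
  have "v \<tau> l \<le> v s l"
  proof (rule DERIV_nonneg_imp_increasing_open[of \<tau> s])
    fix x assume x: "\<tau> < x" "x < s"
    have "\<Psi> (v x l) \<le> 0"
      using Psi_nonpos_supercritical[OF b] v_nonneg[of x l] below[of x] x \<tau> l0 \<eta> by auto
    then show "\<exists>y. ((\<lambda>s. v s l) has_real_derivative y) (at x) \<and> 0 \<le> y"
      using v_has_derivative_at[OF l0, of x] x \<tau> by auto
  qed (use \<tau> in \<open>auto intro: continuous_on_subset[OF cont]\<close>)
  then show False
    using \<tau> \<open>\<not> \<eta> \<le> v s l\<close> by simp
qed

lemma r_unbounded_supercritical:
  assumes b: "b < 0" and e: "0 < e" "e \<le> \<delta>"
  shows "\<forall>\<^sub>F t in at_top. w < r t e"
  using eventually_gt_at_top[of "max 0 (w / \<Phi> e)"]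
proof eventually_elim
  case (elim t)
  have "\<Phi> e \<le> \<Phi> (v s e)" if "s \<in> {0..t}" for s
    using v_ge_supercritical[OF b e order_refl, of s] that e by (intro Phi_mono) auto
  then have "integral {0..t} (\<lambda>_. \<Phi> e) \<le> r t e"
    unfolding r_fun_def using e by (intro integral_le Phi_v_integrable) auto
  moreover have "w < t * \<Phi> e"
    using elim Phi_pos[OF e(1)] by (simp add: divide_less_eq mult.commute)
  ultimately show ?case
    using elim by simp
qed

lemma G_along_v_supercritical:
  assumes b: "b < 0" and l: "0 < l" "l \<le> \<delta>" and t: "t \<ge> 0"
    and below: "\<And>s. 0 \<le> s \<Longrightarrow> s \<le> t \<Longrightarrow> v s l \<le> \<delta>"
  shows "G l - G (v t l) = r t l"
proof -
  have "G (v t l) - G l = sgn b * r t l"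
    by (rule G_along_v[OF l(1) t l(1)]) (use v_ge_supercritical[OF b l order_refl] below in auto)
  then show ?thesis
    using b by simp
qed

text \<open>Up to the first time \<open>\<tau>\<close> at which \<open>v\<close> reaches \<open>\<eta>\<close>, the flow stays in \<open>[l, \<eta>]\<close>, so
  \<open>r \<tau> l\<close> equals the integral of \<open>\<Phi> / \<bar>\<Psi>\<bar>\<close> over \<open>[l, \<eta>]\<close>.\<close>

lemma v_le_while_r_small_supercritical:
  assumes b: "b < 0" and l: "0 < l" "l \<le> \<eta>" and \<eta>: "\<eta> \<le> \<delta>" and s: "0 \<le> s" "s \<le> t"
    and r_small: "r t l < integral {l..\<eta>} ratio"
  shows "v s l \<le> \<eta>"
proof (rule ccontr)
  assume "\<not> v s l \<le> \<eta>"
  have cont: "continuous_on {0..s} (\<lambda>x. v x l)"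
    using l by (intro continuous_on_subset[OF v_continuous]) auto
  obtain \<tau> where \<tau>: "0 \<le> \<tau>" "\<tau> \<le> s" "v \<tau> l = \<eta>" and before: "\<And>x. 0 \<le> x \<Longrightarrow> x < \<tau> \<Longrightarrow> v x l < \<eta>"
    using first_hitting_time[OF cont s(1), of \<eta>] v_init l \<open>\<not> v s l \<le> \<eta>\<close> by auto
  have "v x l \<le> \<delta>" if "0 \<le> x" "x \<le> \<tau>" for x
    using before[of x] that \<tau> \<eta> by (cases "x = \<tau>") auto
  then have "r \<tau> l = integral {l..\<eta>} ratio"
    using G_along_v_supercritical[OF b l(1) _ \<tau>(1)] G_diff[of l \<eta>] \<tau> l \<eta> by simp
  moreover have "r \<tau> l \<le> r t l"
    using r_mono_time[of l \<tau> t] \<tau> s l by simp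
  ultimately show False
    using r_small by simp
qed

lemma r_window_small_supercritical:
  assumes b: "b < 0" and p: "p \<ge> 1" and \<epsilon>: "\<epsilon> > 0"
  obtains \<eta> where "\<eta> > 0"
    "\<And>t l. t \<ge> 0 \<Longrightarrow> 0 < l \<Longrightarrow> p * l \<le> \<eta> \<Longrightarrow> r t (p * l) \<le> W \<Longrightarrow>
       r t (p * l) - r t l \<le> \<epsilon> \<and> v t (p * l) \<le> \<epsilon>"
proof -
  obtain \<eta>\<^sub>1 where \<eta>\<^sub>1: "0 < \<eta>\<^sub>1" "\<eta>\<^sub>1 \<le> \<delta>"
    and small: "\<And>p' q. 0 < p' \<Longrightarrow> p' \<le> q \<Longrightarrow> q \<le> \<eta>\<^sub>1 \<Longrightarrow> q \<le> p * p' \<Longrightarrow> integral {p'..q} ratio \<le> \<epsilon>"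
    using ratio_integral_small[OF p \<epsilon>] by blast
  define \<eta>\<^sub>2 where "\<eta>\<^sub>2 = min \<eta>\<^sub>1 \<epsilon>"
  have \<eta>\<^sub>2: "0 < \<eta>\<^sub>2" "\<eta>\<^sub>2 \<le> \<eta>\<^sub>1" "\<eta>\<^sub>2 \<le> \<delta>" "\<eta>\<^sub>2 \<le> \<epsilon>"
    using \<eta>\<^sub>1 \<epsilon> by (auto simp: \<eta>\<^sub>2_def)
  obtain a where a: "0 < a" "a \<le> \<eta>\<^sub>2" and big: "\<And>q. 0 < q \<Longrightarrow> q \<le> a \<Longrightarrow> W < integral {q..\<eta>\<^sub>2} ratio"
    using ratio_integral_unbounded[OF \<eta>\<^sub>2(1,3)] by blast
  show thesis
  proof (rule that[OF a(1)])
    fix t l :: real assume t: "t \<ge> 0" and l: "0 < l" "p * l \<le> a" and rW: "r t (p * l) \<le> W"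
    have pl: "0 < p * l" "l \<le> p * l" "p * l \<le> \<eta>\<^sub>2"
      using l p a by (auto simp: mult_le_cancel_right1)
    have below: "v s l' \<le> \<eta>\<^sub>2" if "0 < l'" "l' \<le> p * l" "0 \<le> s" "s \<le> t" for s l'
    proof -
      have "v s (p * l) \<le> \<eta>\<^sub>2"
        by (rule v_le_while_r_small_supercritical[OF b pl(1,3) \<eta>\<^sub>2(3) that(3,4)])
           (use big[OF pl(1) l(2)] rW in simp)
      moreover have "v s l' \<le> v s (p * l)"
        by (rule v_mono) (use that in auto)
      ultimately show ?thesis
        by simp
    qed
    have below_\<delta>: "v s l' \<le> \<delta>" if "0 < l'" "l' \<le> p * l" "0 \<le> s" "s \<le> t" for s l'
      using below[OF that] \<eta>\<^sub>2 by linarith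
    have "l \<le> \<delta>" "p * l \<le> \<delta>"
      using pl \<eta>\<^sub>2 by linarith+
    have "G l - G (v t l) = r t l"
      by (rule G_along_v_supercritical[OF b l(1) \<open>l \<le> \<delta>\<close> t], rule below_\<delta>) (use l pl in auto)
    moreover have "G (p * l) - G (v t (p * l)) = r t (p * l)"
      by (rule G_along_v_supercritical[OF b pl(1) \<open>p * l \<le> \<delta>\<close> t], rule below_\<delta>) (use pl in auto)
    moreover have "G (p * l) \<le> G l"
      using pl \<eta>\<^sub>2 l by (intro G_antimono) auto
    moreover have "G (v t l) - G (v t (p * l)) \<le> \<epsilon>"
    proof -
      have "0 < v t l" "v t l \<le> v t (p * l)" "v t (p * l) \<le> \<eta>\<^sub>1"
        using v_ge_supercritical[OF b, of l l t] v_mono[of t l "p * l"] below[of "p * l" t] l pl \<eta>\<^sub>2 t by auto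
      moreover have "v t (p * l) \<le> p * v t l"
        using v_subhomogeneous[OF t, of l p] l p by simp
      ultimately show ?thesis
        using G_diff[of "v t l" "v t (p * l)"] small[of "v t l" "v t (p * l)"] \<eta>\<^sub>1 by simp
    qed
    ultimately show "r t (p * l) - r t l \<le> \<epsilon> \<and> v t (p * l) \<le> \<epsilon>"
      using below[of "p * l" t] pl t \<eta>\<^sub>2 by auto
  qed
qed

section \<open>Convergence to the exponential law\<close>

lemma filterlim_r_at_top:
  assumes "\<eta> > 0"
  shows "filterlim (\<lambda>t. r t \<eta>) at_top at_top"
  unfolding filterlim_at_top_dense
proof
  fix w :: real
  define e where "e = min \<eta> \<delta>"
  have e: "0 < e" "e \<le> \<delta>"
    using assms delta_pos by (auto simp: e_def)
  have "\<forall>\<^sub>F t in at_top. w < r t e"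
    using r_unbounded_subcritical[OF _ e] r_unbounded_supercritical[OF _ e] b_ne by (cases "b > 0") auto
  then show "\<forall>\<^sub>F t in at_top. w < r t \<eta>"
    using eventually_ge_at_top[of 0]
    by eventually_elim (use r_mono[of _ e \<eta>] e in \<open>force simp: e_def\<close>)
qed

lemma r_window_small:
  assumes p: "p \<ge> 1" and \<epsilon>: "\<epsilon> > 0"
  obtains \<eta> where "\<eta> > 0"
    "\<And>t l. t \<ge> 0 \<Longrightarrow> 0 < l \<Longrightarrow> p * l \<le> \<eta> \<Longrightarrow> r t (p * l) \<le> W \<Longrightarrow>
       r t (p * l) - r t l \<le> \<epsilon> \<and> v t (p * l) \<le> \<epsilon>"
proof (cases "b > 0")
  case True
  obtain \<eta> where "\<eta> > 0"
    and window: "\<And>t l. t \<ge> 0 \<Longrightarrow> 0 < l \<Longrightarrow> p * l \<le> \<eta> \<Longrightarrow> r t (p * l) - r t l \<le> \<epsilon> \<and> v t (p * l) \<le> \<epsilon>"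
    using r_window_small_subcritical[OF True p \<epsilon>] by blast
  show thesis
    by (rule that[OF \<open>\<eta> > 0\<close>]) (rule window)
next
  case False
  then have "b < 0"
    using b_ne by simp
  from r_window_small_supercritical[OF this p \<epsilon>] that show thesis .
qed

lemma r_level_crossing:
  assumes t: "t \<ge> 0" and w: "w > 0" and \<eta>: "0 \<le> \<eta>" and big: "w < r t \<eta>"
  obtains \<mu> where "0 < \<mu>" "\<mu> \<le> \<eta>" "\<And>l. 0 \<le> l \<Longrightarrow> l < \<mu> \<Longrightarrow> r t l \<le> w" "\<And>l. \<mu> < l \<Longrightarrow> w < r t l"
proof -
  define S where "S = {l. 0 \<le> l \<and> r t l \<le> w}"
  have "\<forall>\<^sub>F l in at_right 0. 0 < l \<and> r t l < w"
    using eventually_at_right_less order_tendstoD(2)[OF r_tendsto_0[OF t] w] by eventually_elim auto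
  then obtain l\<^sub>0 where l\<^sub>0: "0 < l\<^sub>0" "r t l\<^sub>0 < w"
    using eventually_happens'[OF trivial_limit_at_right_real] by blast
  have S_bound: "l \<le> \<eta>" if "l \<in> S" for l
  proof (rule ccontr)
    assume "\<not> l \<le> \<eta>"
    then have "r t \<eta> \<le> r t l"
      using r_mono[OF t \<eta>, of l] by simp
    then show False
      using that big unfolding S_def by simp
  qed
  have "l\<^sub>0 \<in> S"
    using l\<^sub>0 by (simp add: S_def)
  then have "S \<noteq> {}" "bdd_above S"
    using S_bound by (auto simp: bdd_above_def)
  define \<mu> where "\<mu> = Sup S"
  show thesis
  proof (rule that)
    show "0 < \<mu>" "\<mu> \<le> \<eta>"
      using cSup_upper[OF \<open>l\<^sub>0 \<in> S\<close> \<open>bdd_above S\<close>] cSup_least[OF \<open>S \<noteq> {}\<close> S_bound] l\<^sub>0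
      unfolding \<mu>_def by auto
    show "r t l \<le> w" if "0 \<le> l" "l < \<mu>" for l
    proof -
      obtain s where "s \<in> S" "l < s"
        using \<open>l < \<mu>\<close> less_cSup_iff[OF \<open>S \<noteq> {}\<close> \<open>bdd_above S\<close>] unfolding \<mu>_def by blast
      then show ?thesis
        using r_mono[OF t \<open>0 \<le> l\<close>, of s] unfolding S_def by simp
    qed
    show "w < r t l" if "\<mu> < l" for l
    proof (rule ccontr)
      assume "\<not> w < r t l"
      then have "l \<in> S"
        using that \<open>0 < \<mu>\<close> by (simp add: S_def)
      then show False
        using cSup_upper[OF _ \<open>bdd_above S\<close>, of l] that unfolding \<mu>_def by simp
    qed
  qed
qed

lemma tail_event_bracket:
  assumes x: "x \<ge> 0" and t: "t \<ge> 0" and \<mu>: "0 < \<mu>"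
    and below: "\<And>l. 0 \<le> l \<Longrightarrow> l < \<mu> \<Longrightarrow> r t l \<le> w" and above: "\<And>l. \<mu> < l \<Longrightarrow> w < r t l"
  shows "{\<omega> \<in> space (P x). Y t \<omega> < 1 / \<mu>} \<subseteq> {\<omega> \<in> space (P x). ereal w < r_recip \<Phi> v t (Y t \<omega>)}"
    and "{\<omega> \<in> space (P x). ereal w < r_recip \<Phi> v t (Y t \<omega>)} \<subseteq> {\<omega> \<in> space (P x). Y t \<omega> \<le> 1 / \<mu>}"
proof safe
  fix \<omega> assume \<omega>: "\<omega> \<in> space (P x)" "Y t \<omega> < 1 / \<mu>"
  show "ereal w < r_recip \<Phi> v t (Y t \<omega>)"
  proof (cases "Y t \<omega> = 0")
    case True
    have "ereal w < ereal (r t (2 * \<mu>))"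
      using above[of "2 * \<mu>"] \<mu> by simp
    also have "\<dots> \<le> r_inf \<Phi> v t"
      using r_le_r_inf[OF t, of "2 * \<mu>"] \<mu> by simp
    finally show ?thesis
      using True by (simp add: r_recip_def)
  next
    case False
    then have "\<mu> < 1 / Y t \<omega>"
      using \<omega> Y_nonneg[OF x t \<omega>(1)] \<mu> by (simp add: field_simps)
    then show ?thesis
      using above False by (simp add: r_recip_def)
  qed
next
  fix \<omega> assume \<omega>: "\<omega> \<in> space (P x)" "ereal w < r_recip \<Phi> v t (Y t \<omega>)"
  show "Y t \<omega> \<le> 1 / \<mu>"
  proof (rule ccontr)
    assume "\<not> Y t \<omega> \<le> 1 / \<mu>"
    moreover have "0 < 1 / \<mu>"
      using \<mu> by simp
    ultimately have "0 < Y t \<omega>" "1 / \<mu> < Y t \<omega>"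
      by linarith+
    then have "0 < Y t \<omega>" "1 / Y t \<omega> < \<mu>"
      using \<mu> by (auto simp: field_simps)
    then show False
      using below[of "1 / Y t \<omega>"] \<omega>(2) by (simp add: r_recip_def)
  qed
qed

lemma tail_prob_bounds:
  assumes x: "x \<ge> 0" and t: "t \<ge> 0" and K: "K > 1" and \<theta>: "1 / K \<le> \<theta>"
    and \<mu>: "0 < \<mu>" and below: "\<And>l. 0 \<le> l \<Longrightarrow> l < \<mu> \<Longrightarrow> r t l \<le> w" and above: "\<And>l. \<mu> < l \<Longrightarrow> w < r t l"
    and window: "r t (K * \<mu>) - r t (\<mu> / K) \<le> \<theta>" "v t (K * \<mu>) \<le> \<theta>"
  defines "E \<equiv> {\<omega> \<in> space (P x). ereal w < r_recip \<Phi> v t (Y t \<omega>)}"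
  shows "exp (- (x + 1) * \<theta>) * exp (- w) - exp (- K) \<le> measure (P x) E"
    and "measure (P x) E \<le> exp (2 * \<theta>) * exp (- w)"
proof -
  interpret prob_space "P x"
    using prob_space_P[OF x] .
  note Y = Y_measurable[OF x t] Y_nonneg[OF x t]
  have "E = space (P x) - {\<omega> \<in> space (P x). r_recip \<Phi> v t (Y t \<omega>) \<le> ereal w}"
    unfolding E_def by auto
  then have E: "E \<in> events"
    using r_recip_event_measurable[OF x t, of w] by auto
  note bracket = tail_event_bracket[OF x t \<mu> below above, folded E_def]
  have "r t (K * \<mu>) \<le> w + \<theta>"
    using window(1) below[of "\<mu> / K"] \<mu> K by (auto simp: divide_less_eq)
  then have "- (x + 1) * \<theta> - w \<le> - x * v t (K * \<mu>) - r t (K * \<mu>)"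
    using mult_left_mono[OF window(2) x] by (simp add: algebra_simps)
  then have "exp (- (x + 1) * \<theta>) * exp (- w) \<le> expectation (\<lambda>\<omega>. exp (- (K * \<mu>) * Y t \<omega>))"
    using laplace_Y[OF x t, of "K * \<mu>"] \<mu> K by (simp flip: exp_add)
  also have "\<dots> \<le> prob {\<omega> \<in> space (P x). Y t \<omega> < 1 / \<mu>} + exp (- K)"
    using laplace_le_prob_less[OF Y, of "K * \<mu>" "1 / \<mu>"] \<mu> K by simp
  also have "\<dots> \<le> prob E + exp (- K)"
    using bracket(1) E by (simp add: finite_measure_mono)
  finally show "exp (- (x + 1) * \<theta>) * exp (- w) - exp (- K) \<le> measure (P x) E"
    by simp
  have "prob E \<le> prob {\<omega> \<in> space (P x). Y t \<omega> \<le> 1 / \<mu>}"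
    using bracket(2) Y(1) by (intro finite_measure_mono) measurable
  also have "\<dots> \<le> exp (1 / K) * expectation (\<lambda>\<omega>. exp (- (\<mu> / K) * Y t \<omega>))"
    using prob_le_exp_mult_laplace[OF Y, of "\<mu> / K" "1 / \<mu>"] \<mu> K by simp
  also have "\<dots> = exp (1 / K) * exp (- x * v t (\<mu> / K) - r t (\<mu> / K))"
    using laplace_Y[OF x t, of "\<mu> / K"] \<mu> K by simp
  also have "\<dots> \<le> exp \<theta> * exp (\<theta> - w)"
  proof (intro mult_mono)
    have "w < r t (K * \<mu>)"
      using above[of "K * \<mu>"] \<mu> K by simp
    then show "exp (- x * v t (\<mu> / K) - r t (\<mu> / K)) \<le> exp (\<theta> - w)"
      using window(1) mult_nonneg_nonneg[OF x v_nonneg[OF t, of "\<mu> / K"]] \<mu> K by simp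
  qed (use \<theta> in auto)
  also have "\<dots> = exp (2 * \<theta>) * exp (- w)"
    by (simp flip: exp_add)
  finally show "measure (P x) E \<le> exp (2 * \<theta>) * exp (- w)" .
qed

lemma eventually_tail_prob_bounds:
  assumes x: "x \<ge> 0" and w: "w > 0" and K: "K > 1"
  defines "E t \<equiv> {\<omega> \<in> space (P x). ereal w < r_recip \<Phi> v t (Y t \<omega>)}"
  shows "\<forall>\<^sub>F t in at_top. exp (- (x + 1) * (1 / K)) * exp (- w) - exp (- K) \<le> measure (P x) (E t)
    \<and> measure (P x) (E t) \<le> exp (2 * (1 / K)) * exp (- w)"
proof -
  have "1 \<le> K\<^sup>2" "0 < 1 / K"
    using K by auto
  then obtain \<eta> where "\<eta> > 0" and window: "\<And>t l. t \<ge> 0 \<Longrightarrow> 0 < l \<Longrightarrow> K\<^sup>2 * l \<le> \<eta> \<Longrightarrow> r t (K\<^sup>2 * l) \<le> K\<^sup>2 * w \<Longrightarrow>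
      r t (K\<^sup>2 * l) - r t l \<le> 1 / K \<and> v t (K\<^sup>2 * l) \<le> 1 / K"
    using r_window_small[of "K\<^sup>2" "1 / K" "K\<^sup>2 * w"] by blast
  have "\<forall>\<^sub>F t in at_top. w < r t (\<eta> / K)"
    using filterlim_r_at_top[of "\<eta> / K"] \<open>\<eta> > 0\<close> K by (simp add: filterlim_at_top_dense)
  then show ?thesis
    using eventually_ge_at_top[of 0]
  proof eventually_elim
    case (elim t)
    obtain \<mu> where \<mu>: "0 < \<mu>" "\<mu> \<le> \<eta> / K"
      and below: "\<And>l. 0 \<le> l \<Longrightarrow> l < \<mu> \<Longrightarrow> r t l \<le> w" and above: "\<And>l. \<mu> < l \<Longrightarrow> w < r t l"
      using r_level_crossing[OF elim(2) w _ elim(1)] \<open>\<eta> > 0\<close> K by auto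
    have K\<mu>: "K\<^sup>2 * (\<mu> / K) = K * \<mu>" "K * \<mu> \<le> \<eta>" "\<mu> / K < \<mu>"
      using \<mu> K by (auto simp: power2_eq_square field_simps)
    have "r t (K * \<mu>) \<le> K\<^sup>2 * r t (\<mu> / K)"
      using r_subhomogeneous[OF elim(2), of "\<mu> / K" "K\<^sup>2"] \<open>1 \<le> K\<^sup>2\<close> \<mu> K K\<mu> by simp
    also have "\<dots> \<le> K\<^sup>2 * w"
      using below[of "\<mu> / K"] \<mu> K K\<mu> by (intro mult_left_mono) auto
    finally have "r t (K * \<mu>) - r t (\<mu> / K) \<le> 1 / K \<and> v t (K * \<mu>) \<le> 1 / K"
      using window[OF elim(2), of "\<mu> / K"] \<mu> K K\<mu> by simp
    then show ?case
      using tail_prob_bounds[OF x elim(2) K order_refl \<mu>(1) below above] unfolding E_def by auto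
  qed
qed

lemma tendsto_tail_prob:
  assumes x: "x \<ge> 0" and w: "w > 0"
  shows "((\<lambda>t. measure (P x) {\<omega> \<in> space (P x). ereal w < r_recip \<Phi> v t (Y t \<omega>)}) \<longlongrightarrow> exp (- w)) at_top"
proof (rule tendstoI)
  fix \<epsilon> :: real assume \<epsilon>: "\<epsilon> > 0"
  have inverse_0: "((\<lambda>K::real. 1 / K) \<longlongrightarrow> 0) at_top"
    by (intro tendsto_divide_0[OF tendsto_const] filterlim_at_top_imp_at_infinity filterlim_ident)
  have "((\<lambda>K::real. exp (2 * (1 / K))) \<longlongrightarrow> exp (2 * 0)) at_top"
    by (intro tendsto_intros inverse_0)
  then have "\<forall>\<^sub>F K in at_top. exp (2 * (1 / K)) < 1 + \<epsilon>"
    using \<epsilon> by (intro order_tendstoD(2)) auto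
  moreover have "((\<lambda>K. exp (- (x + 1) * (1 / K))) \<longlongrightarrow> exp (- (x + 1) * 0)) at_top"
    by (intro tendsto_intros inverse_0)
  then have "\<forall>\<^sub>F K in at_top. 1 - \<epsilon> / 2 < exp (- (x + 1) * (1 / K))"
    using \<epsilon> by (intro order_tendstoD(1)) auto
  moreover have "((\<lambda>K::real. exp (- K)) \<longlongrightarrow> 0) at_top"
    by (rule filterlim_compose[OF exp_at_bot filterlim_uminus_at_bot_at_top])
  then have "\<forall>\<^sub>F K in at_top. exp (- K) < \<epsilon> / 2"
    using \<epsilon> by (intro order_tendstoD(2)) auto
  ultimately have "\<forall>\<^sub>F K in at_top. 1 < K \<and> exp (2 * (1 / K)) < 1 + \<epsilon> \<and> 1 - \<epsilon> / 2 < exp (- (x + 1) * (1 / K))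
      \<and> exp (- K) < \<epsilon> / 2"
    using eventually_gt_at_top[of 1] by eventually_elim auto
  then obtain K where K: "1 < K" "exp (2 * (1 / K)) < 1 + \<epsilon>" "1 - \<epsilon> / 2 < exp (- (x + 1) * (1 / K))"
    "exp (- K) < \<epsilon> / 2"
    using eventually_happens'[OF trivial_limit_at_top_linorder] by blast
  have "\<epsilon> * exp (- w) \<le> \<epsilon> * 1"
    using \<epsilon> w by (intro mult_left_mono) auto
  moreover have "exp (- w) - \<epsilon> * exp (- w) / 2 < exp (- (x + 1) * (1 / K)) * exp (- w)"
    using mult_strict_right_mono[OF K(3), of "exp (- w)"] by (simp add: algebra_simps)
  moreover have "exp (2 * (1 / K)) * exp (- w) < exp (- w) + \<epsilon> * exp (- w)"
    using mult_strict_right_mono[OF K(2), of "exp (- w)"] by (simp add: algebra_simps)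
  ultimately have "exp (- w) - \<epsilon> < exp (- (x + 1) * (1 / K)) * exp (- w) - exp (- K)"
    "exp (2 * (1 / K)) * exp (- w) < exp (- w) + \<epsilon>"
    using K(4) by linarith+
  then show "\<forall>\<^sub>F t in at_top.
      dist (measure (P x) {\<omega> \<in> space (P x). ereal w < r_recip \<Phi> v t (Y t \<omega>)}) (exp (- w)) < \<epsilon>"
    using eventually_tail_prob_bounds[OF x w K(1)]
    by (auto simp: dist_real_def abs_less_iff elim!: eventually_mono)
qed

lemma tendsto_r_recip_le_prob:
  assumes x: "x \<ge> 0" and w: "w > 0"
  shows "((\<lambda>t. measure (P x) {\<omega> \<in> space (P x). r_recip \<Phi> v t (Y t \<omega>) \<le> ereal w}) \<longlongrightarrow> 1 - exp (- w)) at_top"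
proof -
  interpret prob_space "P x"
    using prob_space_P[OF x] .
  have "\<forall>\<^sub>F t in at_top. 1 - measure (P x) {\<omega> \<in> space (P x). ereal w < r_recip \<Phi> v t (Y t \<omega>)}
      = measure (P x) {\<omega> \<in> space (P x). r_recip \<Phi> v t (Y t \<omega>) \<le> ereal w}"
    using eventually_ge_at_top[of 0]
  proof eventually_elim
    case (elim t)
    have "{\<omega> \<in> space (P x). ereal w < r_recip \<Phi> v t (Y t \<omega>)}
        = space (P x) - {\<omega> \<in> space (P x). r_recip \<Phi> v t (Y t \<omega>) \<le> ereal w}"
      by auto
    then show ?case
      using prob_compl[OF r_recip_event_measurable[OF x elim, of w]] by simp
  qed
  moreover have "((\<lambda>t. 1 - measure (P x) {\<omega> \<in> space (P x). ereal w < r_recip \<Phi> v t (Y t \<omega>)})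
      \<longlongrightarrow> 1 - exp (- w)) at_top"
    by (intro tendsto_diff tendsto_const tendsto_tail_prob x w)
  ultimately show ?thesis
    by (rule Lim_transform_eventually[rotated])
qed

lemma tendsto_r_recip_cdf:
  assumes x: "x \<ge> 0"
  shows "((\<lambda>t. measure (P x) {\<omega> \<in> space (P x). r_recip \<Phi> v t (Y t \<omega>) \<le> ereal z})
           \<longlongrightarrow> cdf (density lborel (exponential_density 1)) z) at_top"
proof (cases "z > 0")
  case True
  then show ?thesis
    using tendsto_r_recip_le_prob[OF x True] by (simp add: cdf_exponential_1)
next
  case False
  interpret prob_space "P x"
    using prob_space_P[OF x] .
  have "((\<lambda>t. measure (P x) {\<omega> \<in> space (P x). r_recip \<Phi> v t (Y t \<omega>) \<le> ereal z}) \<longlongrightarrow> 0) at_top"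
  proof (rule tendstoI)
    fix \<epsilon> :: real assume "\<epsilon> > 0"
    then have "1 - exp (- (\<epsilon> / 2)) < \<epsilon>"
      using exp_ge_add_one_self[of "- (\<epsilon> / 2)"] by simp
    then have "\<forall>\<^sub>F t in at_top. measure (P x) {\<omega> \<in> space (P x). r_recip \<Phi> v t (Y t \<omega>) \<le> ereal (\<epsilon> / 2)} < \<epsilon>"
      using order_tendstoD(2)[OF tendsto_r_recip_le_prob[OF x]] \<open>\<epsilon> > 0\<close> by simp
    then show "\<forall>\<^sub>F t in at_top. dist (measure (P x) {\<omega> \<in> space (P x). r_recip \<Phi> v t (Y t \<omega>) \<le> ereal z}) 0 < \<epsilon>"
      using eventually_ge_at_top[of 0]
    proof eventually_elim
      case (elim t)
      have "measure (P x) {\<omega> \<in> space (P x). r_recip \<Phi> v t (Y t \<omega>) \<le> ereal z}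
          \<le> measure (P x) {\<omega> \<in> space (P x). r_recip \<Phi> v t (Y t \<omega>) \<le> ereal (\<epsilon> / 2)}"
        using False \<open>\<epsilon> > 0\<close> r_recip_event_measurable[OF x elim(2)]
        by (intro finite_measure_mono) (auto elim: order_trans)
      then show ?case
        using elim(1) by simp
    qed
  qed
  then show ?thesis
    using False by (cases "z = 0") (simp_all add: cdf_exponential_1)
qed

end

theorem theorem4:
  fixes \<sigma> b \<beta> :: real
    and \<pi> \<nu> :: "real measure"
    and v :: "real \<Rightarrow> real \<Rightarrow> real"
    and P :: "real \<Rightarrow> 'a measure"
    and Y :: "real \<Rightarrow> 'a \<Rightarrow> real"
  defines "\<Psi> \<equiv> Psi_mech b \<sigma> \<pi>"
      and "\<Phi> \<equiv> Phi_mech \<beta> \<nu>"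
  assumes sigma_nonneg: "\<sigma> \<ge> 0"
      and beta_nonneg: "\<beta> \<ge> 0"
      and pi_sets: "sets \<pi> = sets borel"
      and pi_sfin: "sigma_finite_measure \<pi>"
      and pi_supp: "emeasure \<pi> {..0} = 0"
      and pi_int: "(\<integral>\<^sup>+ z. ennreal (min z (z^2)) \<partial>\<pi>) < \<infinity>"
      and nu_sets: "sets \<nu> = sets borel"
      and nu_sfin: "sigma_finite_measure \<nu>"
      and nu_supp: "emeasure \<nu> {..0} = 0"
      and nu_int: "(\<integral>\<^sup>+ z. ennreal (min 1 z) \<partial>\<nu>) < \<infinity>"
      and Phi_pos: "\<And>q. q > 0 \<Longrightarrow> \<Phi> q > 0"
      and v_init: "\<And>l. l \<ge> 0 \<Longrightarrow> v 0 l = l"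
      and v_ode: "\<And>l t. l \<ge> 0 \<Longrightarrow> t \<ge> 0 \<Longrightarrow>
                    ((\<lambda>s. v s l) has_real_derivative (- \<Psi> (v t l))) (at t within {0..})"
      and b_ne: "b \<noteq> 0"
      and diverge: "\<And>\<epsilon>. \<epsilon> > 0 \<Longrightarrow>
                    (\<integral>\<^sup>+ u. indicator {0<..<\<epsilon>} u * ennreal (\<Phi> u / \<bar>\<Psi> u\<bar>) \<partial>lborel) = \<infinity>"
      and CBI: "is_CBI \<Phi> v P Y"
  shows "\<And>x z. x \<ge> 0 \<Longrightarrow>
           ((\<lambda>t. measure (P x) {\<omega> \<in> space (P x). r_recip \<Phi> v t (Y t \<omega>) \<le> ereal z})
             \<longlongrightarrow> cdf (density lborel (exponential_density 1)) z) at_top"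
proof -
  interpret cbi \<sigma> b \<pi> \<beta> \<nu> v P Y
    by unfold_locales
       (use beta_nonneg pi_sets pi_supp pi_int nu_sets nu_supp nu_int Phi_pos v_init v_ode b_ne diverge CBI
         in \<open>simp_all add: \<Psi>_def \<Phi>_def\<close>)
  show "\<And>x z. x \<ge> 0 \<Longrightarrow> ?thesis x z"
    unfolding \<Phi>_def by (rule tendsto_r_recip_cdf)
qed

end
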